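(* Let $U$ be an almost periodic unitary operator on a Hilbert space $\mathcal H$. Then for every $k\ge1$, every pair-partition $\alpha:\{1,\dots,2k\}\to\{1,\dots,k\}$ and all $A_1,\dots,A_{2k-1}\in\mathcal B(\mathcal H)$, $$\mathop{\mathrm{s\text{-}lim}}_{N\to\infty}\frac{1}{N^k}\sum_{n_1,\dots,n_k=0}^{N-1}U^{n_{\alpha(1)}}A_1U^{n_{\alpha(2)}}A_2\cdots U^{n_{\alpha(2k-1)}}A_{2k-1}U^{n_{\alpha(2k)}}=S_{\alpha;A_1,\dots,A_{2k-1}},$$ the limit being in the strong operator topology.
   Context: A unitary $U$ on $\mathcal H$ is almost periodic if $\mathcal H$ is the closed linear span of the eigenvectors of $U$. For $z\in\mathbb T$, $E_z$ is the orthogonal projection onto $\{x: Ux=zx\}$, $\sigma_{\mathrm{pp}}(U)$ is the set of eigenvalues of $U$, and $\sigma^{\mathrm a}_{\mathrm{pp}}(U):=\{z\in\sigma_{\mathrm{pp}}(U): zw=1 \text{ for some } w\in\sigma_{\mathrm{pp}}(U)\}$. A pair-partition $\alpha:\{1,\dots,2k\}\to\{1,\dots,k\}$ is a surjection each of whose fibres $\alpha^{-1}(\{j\})$ has exactly two elements. Given $z_1,\dots,z_k\in\mathbb T$, put $z^\#_{\alpha(i)}:=z_j$ if $i$ is the smaller element of $\alpha^{-1}(\{j\})$ and $z^\#_{\alpha(i)}:=\bar z_j$ if $i$ is the larger one (e.g. for $\alpha=(1,2,1,2)$ the term is $E_{z}A_1E_{w}A_2E_{\bar z}A_3E_{\bar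 w}$). The operator $S_{\alpha;A_1,\dots,A_{2k-1}}$ is the weak-operator limit (which exists) of the net, indexed by finite subsets $F\subset\sigma^{\mathrm a}_{\mathrm{pp}}(U)$ ordered by inclusion, of the operators $\sum_{z_1,\dots,z_k\in F}E_{z^\#_{\alpha(1)}}A_1E_{z^\#_{\alpha(2)}}A_2\cdots E_{z^\#_{\alpha(2k-1)}}A_{2k-1}E_{z^\#_{\alpha(2k)}}$. *)

theory Defs
  imports "HOL-Analysis.Analysis"
begin

text \<open>A complex Hilbert space, given explicitly on a type 'a with its additive group
structure, a complex scalar multiplication sm and an inner product ip (linear in the
first argument, conjugate-linear in the second), complete for the induced norm.\<close>

definition hnorm :: "('a \<Rightarrow> 'a \<Rightarrow> complex) \<Rightarrow> 'a \<Rightarrow> real" where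
  "hnorm ip x = sqrt (Re (ip x x))"

definition hilbert_space ::
  "(complex \<Rightarrow> 'a::ab_group_add \<Rightarrow> 'a) \<Rightarrow> ('a \<Rightarrow> 'a \<Rightarrow> complex) \<Rightarrow> bool" where
  "hilbert_space sm ip \<longleftrightarrow>
     (\<forall>x. sm 1 x = x) \<and>
     (\<forall>a b x. sm (a * b) x = sm a (sm b x)) \<and>
     (\<forall>a x y. sm a (x + y) = sm a x + sm a y) \<and>
     (\<forall>a b x. sm (a + b) x = sm a x + sm b x) \<and>
     (\<forall>x y z. ip (x + y) z = ip x z + ip y z) \<and>
     (\<forall>a x y. ip (sm a x) y = a * ip x y) \<and>
     (\<forall>x y. ip y x = cnj (ip x y)) \<and>
     (\<forall>x. Im (ip x x) = 0 \<and> Re (ip x x) \<ge> 0) \<and>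
     (\<forall>x. ip x x = 0 \<longrightarrow> x = 0) \<and>
     (\<forall>X::nat \<Rightarrow> 'a. (\<forall>e>0. \<exists>M. \<forall>m\<ge>M. \<forall>n\<ge>M. hnorm ip (X m - X n) < e) \<longrightarrow>
        (\<exists>L. ((\<lambda>n. hnorm ip (X n - L)) \<longlongrightarrow> 0) sequentially))"

definition bounded_op ::
  "(complex \<Rightarrow> 'a::ab_group_add \<Rightarrow> 'a) \<Rightarrow> ('a \<Rightarrow> 'a \<Rightarrow> complex) \<Rightarrow> ('a \<Rightarrow> 'a) \<Rightarrow> bool" where
  "bounded_op sm ip T \<longleftrightarrow>
     (\<forall>x y. T (x + y) = T x + T y) \<and> (\<forall>a x. T (sm a x) = sm a (T x)) \<and>
     (\<exists>C. \<forall>x. hnorm ip (T x) \<le> C * hnorm ip x)"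

definition unitary_op ::
  "(complex \<Rightarrow> 'a::ab_group_add \<Rightarrow> 'a) \<Rightarrow> ('a \<Rightarrow> 'a \<Rightarrow> complex) \<Rightarrow> ('a \<Rightarrow> 'a) \<Rightarrow> bool" where
  "unitary_op sm ip U \<longleftrightarrow> bounded_op sm ip U \<and> surj U \<and> (\<forall>x y. ip (U x) (U y) = ip x y)"

definition eigenspace :: "(complex \<Rightarrow> 'a \<Rightarrow> 'a) \<Rightarrow> ('a \<Rightarrow> 'a) \<Rightarrow> complex \<Rightarrow> 'a set" where
  "eigenspace sm U z = {x. U x = sm z x}"

definition sigma_pp :: "(complex \<Rightarrow> 'a::zero \<Rightarrow> 'a) \<Rightarrow> ('a \<Rightarrow> 'a) \<Rightarrow> complex set" where
  "sigma_pp sm U = {z. \<exists>x. x \<noteq> 0 \<and> U x = sm z x}"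

definition sigma_pp_a :: "(complex \<Rightarrow> 'a::zero \<Rightarrow> 'a) \<Rightarrow> ('a \<Rightarrow> 'a) \<Rightarrow> complex set" where
  "sigma_pp_a sm U = {z \<in> sigma_pp sm U. \<exists>w \<in> sigma_pp sm U. z * w = 1}"

text \<open>Linear span (finite linear combinations) and almost periodicity:
  H is the closed linear span of the eigenvectors.\<close>
definition hspan :: "(complex \<Rightarrow> 'a::ab_group_add \<Rightarrow> 'a) \<Rightarrow> 'a set \<Rightarrow> 'a set" where
  "hspan sm S = {y. \<exists>I::nat set. \<exists>c v. finite I \<and> (\<forall>i\<in>I. v i \<in> S) \<and>
                     y = (\<Sum>i\<in>I. sm (c i) (v i))}"

definition almost_periodic ::
  "(complex \<Rightarrow> 'a::ab_group_add \<Rightarrow> 'a) \<Rightarrow> ('a \<Rightarrow> 'a \<Rightarrow> complex) \<Rightarrow> ('a \<Rightarrow> 'a) \<Rightarrow> bool" where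
  "almost_periodic sm ip U \<longleftrightarrow>
     (\<forall>x. \<forall>e>0. \<exists>y \<in> hspan sm {v. \<exists>z. U v = sm z v}. hnorm ip (x - y) < e)"

definition orth_proj :: "('a::ab_group_add \<Rightarrow> 'a \<Rightarrow> complex) \<Rightarrow> 'a set \<Rightarrow> 'a \<Rightarrow> 'a" where
  "orth_proj ip M x = (THE y. y \<in> M \<and> (\<forall>m\<in>M. ip (x - y) m = 0))"

definition Eproj ::
  "(complex \<Rightarrow> 'a::ab_group_add \<Rightarrow> 'a) \<Rightarrow> ('a \<Rightarrow> 'a \<Rightarrow> complex) \<Rightarrow> ('a \<Rightarrow> 'a) \<Rightarrow> complex \<Rightarrow> 'a \<Rightarrow> 'a" where
  "Eproj sm ip U z = orth_proj ip (eigenspace sm U z)"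

definition pair_partition :: "nat \<Rightarrow> (nat \<Rightarrow> nat) \<Rightarrow> bool" where
  "pair_partition k \<alpha> \<longleftrightarrow> \<alpha> ` {1..2*k} = {1..k} \<and>
     (\<forall>j\<in>{1..k}. card {i\<in>{1..2*k}. \<alpha> i = j} = 2)"

definition zsharp :: "nat \<Rightarrow> (nat \<Rightarrow> nat) \<Rightarrow> (nat \<Rightarrow> complex) \<Rightarrow> nat \<Rightarrow> complex" where
  "zsharp k \<alpha> z i = (if \<exists>j\<in>{1..2*k}. \<alpha> j = \<alpha> i \<and> i < j then z (\<alpha> i) else cnj (z (\<alpha> i)))"

fun alt :: "nat \<Rightarrow> (nat \<Rightarrow> 'a \<Rightarrow> 'a) \<Rightarrow> (nat \<Rightarrow> 'a \<Rightarrow> 'a) \<Rightarrow> 'a \<Rightarrow> 'a" where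
  "alt 0 B A = id"
| "alt (Suc m) B A = alt m B A \<circ> B (Suc m) \<circ> A (Suc m)"

definition word :: "nat \<Rightarrow> (nat \<Rightarrow> 'a \<Rightarrow> 'a) \<Rightarrow> (nat \<Rightarrow> 'a \<Rightarrow> 'a) \<Rightarrow> 'a \<Rightarrow> 'a" where
  "word k B A = alt (2*k - 1) B A \<circ> B (2*k)"

definition S_partial ::
  "(complex \<Rightarrow> 'a::ab_group_add \<Rightarrow> 'a) \<Rightarrow> ('a \<Rightarrow> 'a \<Rightarrow> complex) \<Rightarrow> ('a \<Rightarrow> 'a) \<Rightarrow> nat \<Rightarrow> (nat \<Rightarrow> nat)
    \<Rightarrow> (nat \<Rightarrow> 'a \<Rightarrow> 'a) \<Rightarrow> complex set \<Rightarrow> 'a \<Rightarrow> 'a" where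
  "S_partial sm ip U k \<alpha> A F x =
     (\<Sum>z \<in> PiE {1..k} (\<lambda>_. F). word k (\<lambda>i. Eproj sm ip U (zsharp k \<alpha> z i)) A x)"

definition S_op ::
  "(complex \<Rightarrow> 'a::ab_group_add \<Rightarrow> 'a) \<Rightarrow> ('a \<Rightarrow> 'a \<Rightarrow> complex) \<Rightarrow> ('a \<Rightarrow> 'a) \<Rightarrow> nat \<Rightarrow> (nat \<Rightarrow> nat)
    \<Rightarrow> (nat \<Rightarrow> 'a \<Rightarrow> 'a) \<Rightarrow> 'a \<Rightarrow> 'a" where
  "S_op sm ip U k \<alpha> A = (THE S. \<forall>x y.
     ((\<lambda>F. ip (S_partial sm ip U k \<alpha> A F x) y) \<longlongrightarrow> ip (S x) y)
       (finite_subsets_at_top (sigma_pp_a sm U)))"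

definition cesaro ::
  "(complex \<Rightarrow> 'a::ab_group_add \<Rightarrow> 'a) \<Rightarrow> ('a \<Rightarrow> 'a) \<Rightarrow> nat \<Rightarrow> (nat \<Rightarrow> nat)
    \<Rightarrow> (nat \<Rightarrow> 'a \<Rightarrow> 'a) \<Rightarrow> nat \<Rightarrow> 'a \<Rightarrow> 'a" where
  "cesaro sm U k \<alpha> A N x =
     sm (1 / of_nat N ^ k) (\<Sum>n \<in> PiE {1..k} (\<lambda>_. {..<N}). word k (\<lambda>i. U ^^ n (\<alpha> i)) A x)"

end

theory Submission
  imports Defs
begin

text \<open>Almost periodicity makes every orbit \<open>{U ^^ n x}\<close> precompact, so the spectral projections
  \<open>P\<^sub>Q = (\<Sum>z\<in>Q. E\<^sub>z)\<close>, \<open>Q\<close> a finite set of eigenvalues, approximate the identity uniformly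
  on the precompact set of vectors to which the powers of \<open>U\<close> are applied inside the word.
  Replacing every \<open>U ^^ n\<close> by \<open>U ^^ n \<circ> P\<^sub>Q\<close> therefore changes the Cesaro averages
  only slightly, uniformly in \<open>N\<close>. In the truncated word \<open>U ^^ n \<circ> P\<^sub>Q = (\<Sum>z\<in>Q. z ^ n E\<^sub>z)\<close>,
  and the average over \<open>n\<^sub>1, \<dots>, n\<^sub>k\<close> factorises over the pairs of \<open>\<alpha>\<close> into averages of
  \<open>(z w) ^ n\<close>, which tend to \<open>1\<close> if \<open>z w = 1\<close> and to \<open>0\<close> otherwise. The surviving terms
  are exactly a partial sum of the net defining \<open>S\<close>. Hence the Cesaro averages form a Cauchy
  sequence, and their limit is also the limit, even in norm, of that net. The projections
  \<open>E\<^sub>z\<close> themselves are obtained as limits of the ergodic averages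
  \<open>1/N \<Sum>n<N. (cnj z) ^ n U ^^ n\<close>.\<close>

section \<open>Hilbert spaces given by a scalar multiplication and an inner product\<close>

locale hilbert =
  fixes sm :: "complex \<Rightarrow> 'a::ab_group_add \<Rightarrow> 'a" and ip :: "'a \<Rightarrow> 'a \<Rightarrow> complex"
  assumes hilbert_space: "hilbert_space sm ip"
begin

lemma vector_space_sm: "vector_space sm"
  using hilbert_space by unfold_locales (auto simp: hilbert_space_def)

sublocale vector_space sm
  by (fact vector_space_sm)

sublocale vector_space_pair sm sm ..

abbreviation nr :: "'a \<Rightarrow> real" where
  "nr \<equiv> hnorm ip"

abbreviation lin :: "('a \<Rightarrow> 'a) \<Rightarrow> bool" where
  "lin \<equiv> Vector_Spaces.linear sm sm"

lemma linI:
  assumes "\<And>x y. T (x + y) = T x + T y" and "\<And>a x. T (sm a x) = sm a (T x)"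
  shows "lin T"
  using assms vector_space_sm by (simp add: Vector_Spaces.linear_iff)

lemma bounded_op_lin: "bounded_op sm ip T \<Longrightarrow> lin T"
  unfolding bounded_op_def by (simp add: linI)

lemma lin_funpow: "lin T \<Longrightarrow> lin (T ^^ n)"
  by (induction n) (simp_all add: linear_id Vector_Spaces.linear_compose)

lemma ip_add_left: "ip (x + y) z = ip x z + ip y z"
  using hilbert_space[unfolded hilbert_space_def] by (elim conjE) (erule allE)+

lemma ip_scale_left [simp]: "ip (sm a x) y = a * ip x y"
  using hilbert_space[unfolded hilbert_space_def] by (elim conjE) (erule allE)+

lemma ip_commute: "ip y x = cnj (ip x y)"
  using hilbert_space[unfolded hilbert_space_def] by (elim conjE) (erule allE)+

lemma ip_self: "Im (ip x x) = 0 \<and> Re (ip x x) \<ge> 0"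
  using hilbert_space[unfolded hilbert_space_def] by (elim conjE) (erule allE)+

lemma ip_self_eq_0: "ip x x = 0 \<Longrightarrow> x = 0"
  using hilbert_space[unfolded hilbert_space_def] by (elim conjE) (erule allE, erule mp)

lemma ip_zero_left [simp]: "ip 0 y = 0"
  using ip_add_left[of 0 0 y] by simp

lemma ip_diff_left: "ip (x - y) z = ip x z - ip y z"
  using ip_add_left[of "x - y" y z] by simp

lemma ip_sum_left: "ip (\<Sum>i\<in>I. f i) y = (\<Sum>i\<in>I. ip (f i) y)"
  by (induction I rule: infinite_finite_induct) (auto simp: ip_add_left)

lemma ip_add_right: "ip z (x + y) = ip z x + ip z y"
  by (metis ip_add_left ip_commute complex_cnj_add)

lemma ip_zero_right [simp]: "ip y 0 = 0"
  by (metis ip_commute ip_zero_left complex_cnj_zero)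

lemma ip_scale_right [simp]: "ip x (sm a y) = cnj a * ip x y"
  by (metis ip_commute ip_scale_left complex_cnj_mult)

lemma ip_diff_right: "ip z (x - y) = ip z x - ip z y"
  by (metis ip_commute ip_diff_left complex_cnj_diff)

lemma ip_eq_0_imp_eq_0: "(\<And>y. ip x y = 0) \<Longrightarrow> x = 0"
  using ip_self_eq_0 by blast

lemma power2_nr: "(nr x)\<^sup>2 = Re (ip x x)"
  using ip_self[of x] by (simp add: hnorm_def)

lemma ip_self_eq_nr: "ip x x = of_real ((nr x)\<^sup>2)"
  using ip_self[of x] by (simp add: power2_nr complex_eq_iff)

lemma nr_nonneg [simp]: "nr x \<ge> 0"
  using ip_self[of x] by (simp add: hnorm_def)

lemma abs_nr [simp]: "\<bar>nr x\<bar> = nr x"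
  by (simp add: abs_of_nonneg)

lemma nr_eq_0_iff [simp]: "nr x = 0 \<longleftrightarrow> x = 0"
proof
  assume "nr x = 0"
  then show "x = 0"
    using ip_self_eq_nr[of x] ip_self_eq_0 by simp
qed (simp add: hnorm_def)

lemma nr_zero [simp]: "nr 0 = 0"
  by simp

lemma nr_scale: "nr (sm a x) = cmod a * nr x"
proof -
  have "ip (sm a x) (sm a x) = (a * cnj a) * ip x x"
    by simp
  also have "\<dots> = of_real ((cmod a)\<^sup>2 * (nr x)\<^sup>2)"
    by (simp only: complex_mult_cnj ip_self_eq_nr[of x] of_real_mult cmod_power2)
  finally have "(nr (sm a x))\<^sup>2 = (cmod a * nr x)\<^sup>2"
    by (simp add: power2_nr power_mult_distrib)
  then show ?thesis
    by (simp add: power2_eq_iff_nonneg)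
qed

lemma nr_minus: "nr (- x) = nr x"
  using nr_scale[of "-1" x] by simp

lemma nr_diff_commute: "nr (x - y) = nr (y - x)"
  using nr_minus[of "x - y"] by simp

lemma nr_add_power2: "(nr (x + y))\<^sup>2 = (nr x)\<^sup>2 + 2 * Re (ip x y) + (nr y)\<^sup>2"
proof -
  have "ip (x + y) (x + y) = ip x x + ip x y + cnj (ip x y) + ip y y"
    by (simp add: ip_add_left ip_add_right ip_commute[of y x])
  then show ?thesis
    by (simp add: power2_nr)
qed

lemma pythagoras: "ip x y = 0 \<Longrightarrow> (nr (x + y))\<^sup>2 = (nr x)\<^sup>2 + (nr y)\<^sup>2"
  by (simp add: nr_add_power2)

lemma cauchy_schwarz: "cmod (ip x y) \<le> nr x * nr y"
proof (cases "y = 0")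
  case False
  define r where "r = (nr y)\<^sup>2"
  define t where "t = ip x y / of_real r"
  have r: "r > 0" and yy: "ip y y = of_real r"
    using False by (simp_all add: r_def ip_self_eq_nr)
  \<comment> \<open>expand \<open>0 \<le> \<parallel>x - t y\<parallel>\<^sup>2\<close> for the optimal \<open>t\<close>\<close>
  have "ip (x - sm t y) (x - sm t y) = ip x x - cnj t * ip x y - t * cnj (ip x y) + t * cnj t * ip y y"
    by (simp add: ip_diff_left ip_diff_right ip_commute[of y x] algebra_simps)
  also have "t * cnj t * ip y y = t * cnj (ip x y)"
    using r by (simp add: t_def yy)
  also have "cnj t * ip x y = (cnj (ip x y) * ip x y) / of_real r"
    by (simp add: t_def)
  also have "cnj (ip x y) * ip x y = of_real ((cmod (ip x y))\<^sup>2)"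
    by (metis complex_norm_square mult.commute)
  finally have "(cmod (ip x y))\<^sup>2 / r \<le> (nr x)\<^sup>2"
    using ip_self[of "x - sm t y"] by (simp add: power2_nr del: of_real_power)
  then have "(cmod (ip x y))\<^sup>2 \<le> (nr x * nr y)\<^sup>2"
    using r by (simp add: r_def field_simps power_mult_distrib)
  then show ?thesis
    by (meson mult_nonneg_nonneg nr_nonneg power2_le_imp_le)
qed simp

lemma nr_triangle: "nr (x + y) \<le> nr x + nr y"
proof -
  have "Re (ip x y) \<le> nr x * nr y"
    using cauchy_schwarz[of x y] complex_Re_le_cmod order_trans by blast
  then have "(nr (x + y))\<^sup>2 \<le> (nr x)\<^sup>2 + 2 * (nr x * nr y) + (nr y)\<^sup>2"
    unfolding nr_add_power2 by linarith
  also have "\<dots> = (nr x + nr y)\<^sup>2"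
    by (simp add: power2_sum)
  finally show ?thesis
    by (meson add_nonneg_nonneg nr_nonneg power2_le_imp_le)
qed

lemma nr_triangle_diff: "nr (x - z) \<le> nr (x - y) + nr (y - z)"
  using nr_triangle[of "x - y" "y - z"] by simp

lemma nr_diff_le: "nr (x - y) \<le> nr x + nr y"
  using nr_triangle[of x "- y"] by (simp add: nr_minus)

lemma nr_sum: "nr (\<Sum>i\<in>I. f i) \<le> (\<Sum>i\<in>I. nr (f i))"
proof (induction I rule: infinite_finite_induct)
  case (insert i I)
  then show ?case
    using nr_triangle[of "f i" "sum f I"] by simp
qed auto

lemma nr_average_le:
  assumes "\<And>n. n \<in> P \<Longrightarrow> nr (a n) \<le> b" and "b \<ge> 0"
  shows "nr (sm (1 / of_nat (card P)) (\<Sum>n\<in>P. a n)) \<le> b"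
proof (cases "card P = 0")
  case False
  have "nr (\<Sum>n\<in>P. a n) \<le> of_nat (card P) * b"
    using nr_sum[of a P] sum_mono[of P "\<lambda>n. nr (a n)" "\<lambda>_. b"] assms(1) by simp
  then show ?thesis
    using False by (simp add: nr_scale norm_divide field_simps)
qed (simp add: assms(2))

lemma orthogonal_nr_le:
  assumes "ip y (x - y) = 0"
  shows "nr y \<le> nr x" and "nr (x - y) \<le> nr x"
proof -
  have "(nr x)\<^sup>2 = (nr y)\<^sup>2 + (nr (x - y))\<^sup>2"
    using pythagoras[OF assms] by simp
  then have "(nr y)\<^sup>2 \<le> (nr x)\<^sup>2" and "(nr (x - y))\<^sup>2 \<le> (nr x)\<^sup>2"
    by simp_all
  then show "nr y \<le> nr x" and "nr (x - y) \<le> nr x"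
    by (auto intro: power2_le_imp_le)
qed

definition hcauchy :: "(nat \<Rightarrow> 'a) \<Rightarrow> bool" where
  "hcauchy X \<longleftrightarrow> (\<forall>e>0. \<exists>M. \<forall>m\<ge>M. \<forall>n\<ge>M. nr (X m - X n) < e)"

definition hlim :: "(nat \<Rightarrow> 'a) \<Rightarrow> 'a \<Rightarrow> bool" where
  "hlim X L \<longleftrightarrow> ((\<lambda>n. nr (X n - L)) \<longlongrightarrow> 0) sequentially"

lemma hcauchy_imp_hlim: "hcauchy X \<Longrightarrow> \<exists>L. hlim X L"
  using hilbert_space[unfolded hilbert_space_def] unfolding hcauchy_def hlim_def
  by (elim conjE) (erule allE, erule mp)

lemma hlim_iff: "hlim X L \<longleftrightarrow> (\<forall>e>0. \<exists>M. \<forall>n\<ge>M. nr (X n - L) < e)"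
  unfolding hlim_def LIMSEQ_def dist_real_def by simp

lemma hlim_bound:
  assumes "\<And>n. nr (X n - L) \<le> b n" and "(b \<longlongrightarrow> 0) sequentially"
  shows "hlim X L"
  unfolding hlim_def using assms(1) by (intro Lim_null_comparison[OF always_eventually assms(2)]) simp

lemma hlim_unique:
  assumes "hlim X L" and "hlim X L'"
  shows "L = L'"
proof -
  have "((\<lambda>n. nr (L - L')) \<longlongrightarrow> 0) sequentially"
  proof (rule Lim_null_comparison[OF always_eventually])
    have "nr (L - L') \<le> nr (X n - L) + nr (X n - L')" for n
      using nr_triangle_diff[of L L' "X n"] nr_diff_commute[of L "X n"] by simp
    then show "\<forall>n. norm (nr (L - L')) \<le> nr (X n - L) + nr (X n - L')"
      by simp
    show "((\<lambda>n. nr (X n - L) + nr (X n - L')) \<longlongrightarrow> 0) sequentially"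
      using tendsto_add[OF assms[unfolded hlim_def]] by simp
  qed
  then show ?thesis
    by (simp add: LIMSEQ_const_iff)
qed

lemma hlim_imp_hcauchy:
  assumes "hlim X L"
  shows "hcauchy X"
  unfolding hcauchy_def
proof (intro allI impI)
  fix e :: real assume "e > 0"
  then obtain M where M: "\<forall>n\<ge>M. nr (X n - L) < e/2"
    using assms unfolding hlim_iff by (meson half_gt_zero)
  have "nr (X m - X n) < e" if "m \<ge> M" "n \<ge> M" for m n
    using nr_triangle_diff[of "X m" "X n" L] nr_diff_commute[of L "X n"]
      M[rule_format, OF that(1)] M[rule_format, OF that(2)] by linarith
  then show "\<exists>M. \<forall>m\<ge>M. \<forall>n\<ge>M. nr (X m - X n) < e"
    by blast
qed

lemma hlim_const: "hlim (\<lambda>n. x) x"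
  unfolding hlim_def by simp

lemma hlim_add:
  assumes "hlim X L" and "hlim Y M"
  shows "hlim (\<lambda>n. X n + Y n) (L + M)"
proof (rule hlim_bound)
  show "nr (X n + Y n - (L + M)) \<le> nr (X n - L) + nr (Y n - M)" for n
  proof -
    have "X n + Y n - (L + M) = (X n - L) + (Y n - M)"
      by (simp add: algebra_simps)
    then show ?thesis
      using nr_triangle[of "X n - L" "Y n - M"] by metis
  qed
  show "((\<lambda>n. nr (X n - L) + nr (Y n - M)) \<longlongrightarrow> 0) sequentially"
    using tendsto_add[OF assms[unfolded hlim_def]] by simp
qed

lemma hlim_sum:
  assumes "\<And>i. i \<in> I \<Longrightarrow> hlim (X i) (L i)"
  shows "hlim (\<lambda>n. \<Sum>i\<in>I. X i n) (\<Sum>i\<in>I. L i)"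
  using assms by (induction I rule: infinite_finite_induct) (simp_all add: hlim_const hlim_add)

lemma hlim_scale_left:
  assumes "(f \<longlongrightarrow> c) sequentially"
  shows "hlim (\<lambda>n. sm (f n) v) (sm c v)"
proof (rule hlim_bound)
  show "nr (sm (f n) v - sm c v) \<le> cmod (f n - c) * nr v" for n
    by (simp add: scale_left_diff_distrib[symmetric] nr_scale)
  have "((\<lambda>n. cmod (f n - c) * nr v) \<longlongrightarrow> cmod (c - c) * nr v) sequentially"
    by (intro tendsto_intros assms)
  then show "((\<lambda>n. cmod (f n - c) * nr v) \<longlongrightarrow> 0) sequentially"
    by simp
qed

lemma hlim_scale:
  assumes "hlim X L"
  shows "hlim (\<lambda>n. sm a (X n)) (sm a L)"
proof (rule hlim_bound)
  show "nr (sm a (X n) - sm a L) \<le> cmod a * nr (X n - L)" for n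
    by (simp add: scale_right_diff_distrib[symmetric] nr_scale)
  show "((\<lambda>n. cmod a * nr (X n - L)) \<longlongrightarrow> 0) sequentially"
    using tendsto_mult_left[OF assms[unfolded hlim_def], of "cmod a"] by simp
qed

lemma hlim_ip:
  assumes "hlim X L"
  shows "((\<lambda>n. ip (X n) y) \<longlongrightarrow> ip L y) sequentially"
proof -
  have "((\<lambda>n. ip (X n) y - ip L y) \<longlongrightarrow> 0) sequentially"
  proof (rule Lim_null_comparison[OF always_eventually])
    have "cmod (ip (X n) y - ip L y) \<le> nr (X n - L) * nr y" for n
      using cauchy_schwarz[of "X n - L" y] by (simp add: ip_diff_left)
    then show "\<forall>n. norm (ip (X n) y - ip L y) \<le> nr (X n - L) * nr y"
      by simp
    show "((\<lambda>n. nr (X n - L) * nr y) \<longlongrightarrow> 0) sequentially"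
      using tendsto_mult_right[OF assms[unfolded hlim_def], of "nr y"] by simp
  qed
  then show ?thesis
    by (rule LIM_zero_cancel)
qed

lemma hcauchy_uniform_approx:
  assumes "\<And>e. e > 0 \<Longrightarrow> \<exists>Y. hcauchy Y \<and> (\<forall>n. nr (X n - Y n) \<le> e)"
  shows "hcauchy X"
  unfolding hcauchy_def
proof (intro allI impI)
  fix e :: real assume "e > 0"
  then obtain Y where Y: "hcauchy Y" "\<And>n. nr (X n - Y n) \<le> e / 4"
    using assms[of "e / 4"] by auto
  then obtain M where M: "\<forall>m\<ge>M. \<forall>n\<ge>M. nr (Y m - Y n) < e / 2"
    using \<open>e > 0\<close> unfolding hcauchy_def by (meson half_gt_zero)
  have "nr (X m - X n) < e" if "m \<ge> M" "n \<ge> M" for m n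
  proof -
    have "nr (X m - X n) \<le> nr (X m - Y m) + nr (Y m - Y n) + nr (Y n - X n)"
      using nr_triangle_diff[of "X m" "X n" "Y m"] nr_triangle_diff[of "Y m" "X n" "Y n"] by simp
    then show ?thesis
      using Y(2)[of m] Y(2)[of n] nr_diff_commute[of "Y n"] M that by fastforce
  qed
  then show "\<exists>M. \<forall>m\<ge>M. \<forall>n\<ge>M. nr (X m - X n) < e"
    by blast
qed

lemma hlim_dist_le:
  assumes "hlim X a" and "hlim Y b" and "\<And>n. nr (X n - Y n) \<le> \<eta>"
  shows "nr (a - b) \<le> \<eta>"
proof -
  have "nr (a - b) \<le> nr (X n - a) + \<eta> + nr (Y n - b)" for n
    using nr_triangle_diff[of a b "X n"] nr_triangle_diff[of "X n" b "Y n"] assms(3)[of n]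
      nr_diff_commute[of a "X n"] by simp
  moreover have "((\<lambda>n. nr (X n - a) + \<eta> + nr (Y n - b)) \<longlongrightarrow> 0 + \<eta> + 0) sequentially"
    using assms(1,2) unfolding hlim_def by (intro tendsto_intros)
  ultimately show ?thesis
    using LIMSEQ_le_const[of _ "0 + \<eta> + 0" "nr (a - b)"] by simp
qed

definition precompact :: "'a set \<Rightarrow> bool" where
  "precompact S \<longleftrightarrow> (\<forall>e>0. \<exists>F. finite F \<and> (\<forall>x\<in>S. \<exists>y\<in>F. nr (x - y) < e))"

lemma precompactD: "precompact S \<Longrightarrow> e > 0 \<Longrightarrow> \<exists>F. finite F \<and> (\<forall>x\<in>S. \<exists>y\<in>F. nr (x - y) < e)"
  unfolding precompact_def by blast

lemma precompact_singleton: "precompact {x}"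
  unfolding precompact_def by (intro allI impI exI[of _ "{x}"]) auto

lemma precompact_Un:
  assumes "precompact S" and "precompact T"
  shows "precompact (S \<union> T)"
  unfolding precompact_def
proof (intro allI impI)
  fix e :: real assume "e > 0"
  obtain F G where "finite F" "\<forall>x\<in>S. \<exists>y\<in>F. nr (x - y) < e"
    and "finite G" "\<forall>x\<in>T. \<exists>y\<in>G. nr (x - y) < e"
    using precompactD[OF assms(1) \<open>e > 0\<close>] precompactD[OF assms(2) \<open>e > 0\<close>] by blast
  then show "\<exists>F. finite F \<and> (\<forall>x\<in>S \<union> T. \<exists>y\<in>F. nr (x - y) < e)"
    by (intro exI[of _ "F \<union> G"]) blast
qed

lemma precompact_UN:
  assumes "finite I" and "\<And>i. i \<in> I \<Longrightarrow> precompact (S i)"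
  shows "precompact (\<Union>i\<in>I. S i)"
  using assms
proof (induction I rule: finite_induct)
  case empty
  then show ?case
    unfolding precompact_def by (intro allI impI exI[of _ "{}"]) simp
next
  case (insert i I)
  then show ?case
    by (simp add: precompact_Un)
qed

lemma precompact_image:
  assumes "precompact S" and "\<And>x y. nr (T x - T y) \<le> C * nr (x - y)" and "C \<ge> 0"
  shows "precompact (T ` S)"
  unfolding precompact_def
proof (intro allI impI)
  fix e :: real assume e: "e > 0"
  define d where "d = e / (C + 1)"
  have d: "d > 0" "C * d < e"
    using e assms(3) by (simp_all add: d_def field_simps)
  obtain F where F: "finite F" "\<forall>x\<in>S. \<exists>y\<in>F. nr (x - y) < d"
    using precompactD[OF assms(1) d(1)] by blast
  have "\<exists>y\<in>T ` F. nr (u - y) < e" if u: "u \<in> T ` S" for u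
  proof -
    obtain x where x: "x \<in> S" "u = T x"
      using u by blast
    then obtain y where y: "y \<in> F" "nr (x - y) < d"
      using F(2) by blast
    have "nr (T x - T y) \<le> C * d"
      using assms(2)[of x y] y(2) assms(3) by (meson less_imp_le mult_left_mono order_trans)
    then have "nr (u - T y) < e"
      using x(2) d(2) by simp
    then show ?thesis
      using y(1) by (intro bexI[of _ "T y"]) simp_all
  qed
  then show "\<exists>F. finite F \<and> (\<forall>x\<in>T ` S. \<exists>y\<in>F. nr (x - y) < e)"
    using F(1) by (intro exI[of _ "T ` F"]) simp
qed

end

section \<open>Powers of unit complex numbers\<close>

lemma cnj_mult_self_unit: "cmod z = 1 \<Longrightarrow> cnj z * z = 1"
  by (metis complex_norm_square mult.commute of_real_1 power_one)

lemma unit_inverse_eq_cnj: "cmod a = 1 \<Longrightarrow> a * b = 1 \<Longrightarrow> b = cnj a"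
  by (metis cnj_mult_self_unit mult.assoc mult_1_left mult_1_right)

lemma cesaro_power_tendsto:
  fixes d :: complex
  assumes "cmod d \<le> 1"
  shows "((\<lambda>N. (1 / of_nat N) * (\<Sum>n<N. d ^ n)) \<longlongrightarrow> (if d = 1 then 1 else 0)) sequentially"
proof (cases "d = 1")
  case True
  have "\<forall>\<^sub>F N in sequentially. (1 / of_nat N) * (\<Sum>n<N. d ^ n) = (1::complex)"
    using eventually_ge_at_top[of "1::nat"] by eventually_elim (simp add: True)
  then show ?thesis
    using True by (simp add: tendsto_eventually)
next
  case False
  define c where "c = 2 / cmod (1 - d)"
  have bound: "cmod ((1 / of_nat N) * (\<Sum>n<N. d ^ n)) \<le> c * (1 / real N)" for N
  proof -
    have "cmod (1 - d ^ N) \<le> cmod 1 + cmod (d ^ N)"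
      by (rule norm_triangle_ineq4)
    also have "cmod (d ^ N) \<le> 1"
      using assms by (simp add: norm_power power_le_one)
    finally have "cmod (1 - d ^ N) / cmod (1 - d) \<le> c"
      unfolding c_def by (intro divide_right_mono) auto
    then have "cmod (\<Sum>n<N. d ^ n) \<le> c"
      using False by (simp add: sum_gp_strict norm_divide)
    then show ?thesis
      by (simp add: norm_mult norm_divide divide_simps mult.commute)
  qed
  have "((\<lambda>N. (1 / of_nat N) * (\<Sum>n<N. d ^ n)) \<longlongrightarrow> 0) sequentially"
  proof (rule Lim_null_comparison[OF always_eventually])
    show "\<forall>N. norm ((1 / of_nat N) * (\<Sum>n<N. d ^ n)) \<le> c * (1 / real N)"
      using bound by simp
    have "((\<lambda>N. c * (1 / real N)) \<longlongrightarrow> c * 0) sequentially"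
      by (intro tendsto_mult tendsto_const lim_const_over_n)
    then show "((\<lambda>N. c * (1 / real N)) \<longlongrightarrow> 0) sequentially"
      by simp
  qed
  then show ?thesis
    using False by simp
qed

lemma floor_grid_close:
  assumes "K > 0" and "\<lfloor>Re a * K\<rfloor> = \<lfloor>Re b * K\<rfloor>" and "\<lfloor>Im a * K\<rfloor> = \<lfloor>Im b * K\<rfloor>"
  shows "cmod (a - b) < 2 / K"
proof -
  have "\<bar>Re a * K - Re b * K\<bar> < 1" "\<bar>Im a * K - Im b * K\<bar> < 1"
    using assms(2,3) by linarith+
  then have "\<bar>Re a - Re b\<bar> * K < 1" "\<bar>Im a - Im b\<bar> * K < 1"
    using assms(1) by (simp_all add: left_diff_distrib[symmetric] abs_mult)
  then have "\<bar>Re (a - b)\<bar> < 1 / K" "\<bar>Im (a - b)\<bar> < 1 / K"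
    using assms(1) by (simp_all add: field_simps)
  then show ?thesis
    using cmod_le[of "a - b"] by simp
qed

text \<open>Sort the exponents \<open>n\<close> by the cells of a grid of mesh \<open>1/K\<close> containing the powers
  \<open>z ^ n\<close>, \<open>z \<in> Q\<close>: only finitely many patterns of cells occur.\<close>

lemma powers_finite_net:
  fixes Q :: "complex set"
  assumes "finite Q" and "\<And>z. z \<in> Q \<Longrightarrow> cmod z \<le> 1" and "\<delta> > 0"
  shows "\<exists>M. finite M \<and> (\<forall>n. \<exists>m\<in>M. \<forall>z\<in>Q. cmod (z ^ n - z ^ m) < \<delta>)"
proof -
  define K where "K = 2 / \<delta>"
  have K: "K > 0" "2 / K = \<delta>"
    using assms(3) by (simp_all add: K_def)
  define cell where "cell a = (\<lfloor>Re a * K\<rfloor>, \<lfloor>Im a * K\<rfloor>)" for a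
  define g where "g n = restrict (\<lambda>z. cell (z ^ n)) Q" for n
  have "cell a \<in> {-\<lceil>K\<rceil>..\<lceil>K\<rceil>} \<times> {-\<lceil>K\<rceil>..\<lceil>K\<rceil>}" if "cmod a \<le> 1" for a
  proof -
    have "\<bar>Re a * K\<bar> \<le> K" "\<bar>Im a * K\<bar> \<le> K"
      using that K abs_Re_le_cmod[of a] abs_Im_le_cmod[of a]
      by (simp_all add: abs_mult mult_left_le_one_le)
    then show ?thesis
      unfolding cell_def by (auto simp: abs_le_iff) linarith+
  qed
  then have "range g \<subseteq> PiE Q (\<lambda>_. {-\<lceil>K\<rceil>..\<lceil>K\<rceil>} \<times> {-\<lceil>K\<rceil>..\<lceil>K\<rceil>})"
    using assms(2) by (auto simp: g_def norm_power power_le_one)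
  then have "finite (range g)"
    using assms(1) by (meson finite_PiE finite_SigmaI finite_atLeastAtMost_int finite_subset)
  define rep where "rep c = (SOME n. g n = c)" for c
  have rep: "g (rep (g n)) = g n" for n
    unfolding rep_def by (metis (mono_tags) someI_ex)
  have "cmod (z ^ n - z ^ rep (g n)) < \<delta>" if "z \<in> Q" for z n
    using fun_cong[OF rep[of n], of z] that floor_grid_close[OF K(1)] K(2) by (simp add: g_def cell_def)
  then have "\<forall>n. \<exists>m\<in>rep ` range g. \<forall>z\<in>Q. cmod (z ^ n - z ^ m) < \<delta>"
    by blast
  then show ?thesis
    using \<open>finite (range g)\<close> by blast
qed

section \<open>Unitary operators\<close>

locale unitary = hilbert +
  fixes U :: "'a \<Rightarrow> 'a"
  assumes unitary: "unitary_op sm ip U"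
begin

lemma lin_U: "lin U"
  using unitary bounded_op_lin unfolding unitary_op_def by blast

lemma ip_U: "ip (U x) (U y) = ip x y"
  using unitary unfolding unitary_op_def by blast

lemma U_0 [simp]: "U 0 = 0"
  by (rule linear_0[OF lin_U])

lemma nr_U [simp]: "nr (U x) = nr x"
  by (simp add: hnorm_def ip_U)

lemma lin_U_power: "lin (U ^^ n)"
  by (rule lin_funpow[OF lin_U])

lemma ip_U_power: "ip ((U ^^ n) x) ((U ^^ n) y) = ip x y"
  by (induction n) (simp_all add: ip_U)

lemma nr_U_power [simp]: "nr ((U ^^ n) x) = nr x"
  by (simp add: hnorm_def ip_U_power)

lemma U_power_eigen: "U v = sm z v \<Longrightarrow> (U ^^ n) v = sm (z ^ n) v"
  by (induction n) (simp_all add: linear_scale[OF lin_U] mult.commute)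

lemma nr_U_power_diff_le:
  "nr ((U ^^ n) x - (U ^^ m) x) \<le> 2 * nr (x - y) + nr ((U ^^ n) y - (U ^^ m) y)"
proof -
  have eq: "(U ^^ n) x - (U ^^ m) x = (U ^^ n) (x - y) + ((U ^^ n) y - (U ^^ m) y) - (U ^^ m) (x - y)"
    by (simp add: linear_diff[OF lin_U_power] algebra_simps)
  have "nr ((U ^^ n) x - (U ^^ m) x) \<le> nr ((U ^^ n) (x - y) + ((U ^^ n) y - (U ^^ m) y)) + nr ((U ^^ m) (x - y))"
    unfolding eq by (rule nr_diff_le)
  also have "\<dots> \<le> nr ((U ^^ n) (x - y)) + nr ((U ^^ n) y - (U ^^ m) y) + nr ((U ^^ m) (x - y))"
    using nr_triangle[of "(U ^^ n) (x - y)" "(U ^^ n) y - (U ^^ m) y"] by linarith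
  finally show ?thesis
    by simp
qed

lemma eigenvalue_unit:
  assumes "U v = sm z v" and "v \<noteq> 0"
  shows "cmod z = 1"
proof -
  have "ip v v = cnj z * z * ip v v"
    using ip_U[of v v] assms(1) by (simp add: mult.assoc)
  moreover have "ip v v \<noteq> 0"
    using assms(2) ip_self_eq_0 by blast
  ultimately have "z * cnj z = 1"
    by (simp add: mult.commute)
  then have "(cmod z)\<^sup>2 = 1"
    by (metis complex_norm_square of_real_eq_1_iff)
  then show ?thesis
    using norm_ge_zero[of z] by (auto simp add: power2_eq_1_iff)
qed

lemma sigma_pp_unit: "z \<in> sigma_pp sm U \<Longrightarrow> cmod z = 1"
  unfolding sigma_pp_def using eigenvalue_unit by blast

lemma sigma_pp_a_unit: "z \<in> sigma_pp_a sm U \<Longrightarrow> cmod z = 1"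
  unfolding sigma_pp_a_def using sigma_pp_unit by blast

lemma sigma_pp_a_cnj:
  assumes "z \<in> sigma_pp_a sm U"
  shows "cnj z \<in> sigma_pp_a sm U"
proof -
  obtain w where w: "w \<in> sigma_pp sm U" "z * w = 1" and z: "z \<in> sigma_pp sm U"
    using assms unfolding sigma_pp_a_def by blast
  then have "w = cnj z"
    using unit_inverse_eq_cnj sigma_pp_unit by blast
  moreover have "cnj z * z = 1"
    using cnj_mult_self_unit sigma_pp_unit[OF z] by blast
  ultimately show ?thesis
    unfolding sigma_pp_a_def using w(1) z by blast
qed

lemma eigenvectors_orthogonal:
  assumes "U v = sm z v" and "U u = sm w u" and "z \<noteq> w"
  shows "ip v u = 0"
proof (cases "u = 0")
  case False
  then have w: "cnj w * w = 1"
    using eigenvalue_unit[OF assms(2)] cnj_mult_self_unit by blast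
  have "ip v u = cnj w * z * ip v u"
    using ip_U[of v u] assms(1,2) by (simp add: mult.assoc)
  then have "(cnj w * z - 1) * ip v u = 0"
    by (simp add: algebra_simps)
  moreover have "cnj w * z \<noteq> 1"
  proof
    assume "cnj w * z = 1"
    then have "z * (cnj w * w) = w"
      by (simp add: ac_simps)
    then show False
      using w assms(3) by (simp add: mult.assoc)
  qed
  ultimately show ?thesis
    by simp
qed simp

end

section \<open>Almost periodic unitary operators\<close>

locale almost_periodic_unitary = unitary +
  assumes almost_periodic: "almost_periodic sm ip U"
begin

lemma hspan_eigenvectors_sum:
  assumes "y \<in> hspan sm {v. \<exists>z. U v = sm z v}"
  shows "\<exists>(I :: nat set) c v z. finite I \<and> (\<forall>i\<in>I. U (v i) = sm (z i) (v i)) \<and> y = (\<Sum>i\<in>I. sm (c i) (v i))"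
proof -
  obtain I :: "nat set" and c v where "finite I" "\<forall>i\<in>I. \<exists>z. U (v i) = sm z (v i)"
    "y = (\<Sum>i\<in>I. sm (c i) (v i))"
    using assms unfolding hspan_def by blast
  moreover from this(2) obtain z where "\<forall>i\<in>I. U (v i) = sm (z i) (v i)"
    by metis
  ultimately show ?thesis
    by blast
qed

text \<open>An \<open>\<epsilon>/3\<close>-argument: the eigenvectors span a dense subspace, and the \<open>T N\<close> are uniformly
  bounded.\<close>

lemma convergent_of_eigenvectors:
  assumes lin: "\<And>N. lin (T N)" and bdd: "\<And>N x. nr (T N x) \<le> C * nr x" and C: "C \<ge> 0"
    and eigen: "\<And>v z. U v = sm z v \<Longrightarrow> \<exists>L. hlim (\<lambda>N. T N v) L"
  shows "\<exists>L. hlim (\<lambda>N. T N x) L"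
proof (rule hcauchy_imp_hlim, rule hcauchy_uniform_approx)
  fix e :: real assume "e > 0"
  define d where "d = e / (C + 1)"
  have "d > 0" "C * d \<le> e"
    using \<open>e > 0\<close> C by (simp_all add: d_def field_simps)
  then obtain y where y_span: "y \<in> hspan sm {v. \<exists>z. U v = sm z v}" and y: "nr (x - y) < d"
    using almost_periodic unfolding almost_periodic_def by blast
  obtain I :: "nat set" and c v z where "finite I" and v: "\<forall>i\<in>I. U (v i) = sm (z i) (v i)"
    and y_eq: "y = (\<Sum>i\<in>I. sm (c i) (v i))"
    using hspan_eigenvectors_sum[OF y_span] by (elim exE conjE)
  have "\<forall>i\<in>I. \<exists>L. hlim (\<lambda>N. T N (v i)) L"
    using eigen v by blast
  then obtain L where L: "\<And>i. i \<in> I \<Longrightarrow> hlim (\<lambda>N. T N (v i)) (L i)"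
    by metis
  have "hlim (\<lambda>N. \<Sum>i\<in>I. sm (c i) (T N (v i))) (\<Sum>i\<in>I. sm (c i) (L i))"
    by (intro hlim_sum hlim_scale L)
  then have "hlim (\<lambda>N. T N y) (\<Sum>i\<in>I. sm (c i) (L i))"
    by (simp add: y_eq linear_sum[OF lin] linear_scale[OF lin])
  moreover have "nr (T N x - T N y) \<le> e" for N
  proof -
    have "nr (T N x - T N y) \<le> C * nr (x - y)"
      using bdd[of N "x - y"] by (simp add: linear_diff[OF lin])
    also have "\<dots> \<le> C * d"
      using y C by (intro mult_left_mono) auto
    finally show ?thesis
      using \<open>C * d \<le> e\<close> by linarith
  qed
  ultimately show "\<exists>Y. hcauchy Y \<and> (\<forall>N. nr (T N x - Y N) \<le> e)"
    using hlim_imp_hcauchy by (intro exI[of _ "\<lambda>N. T N y"]) blast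
qed

definition ergodic_avg :: "complex \<Rightarrow> nat \<Rightarrow> 'a \<Rightarrow> 'a" where
  "ergodic_avg z N x = sm (1 / of_nat N) (\<Sum>n<N. sm (cnj z ^ n) ((U ^^ n) x))"

lemma lin_ergodic_avg: "lin (ergodic_avg z N)"
proof (rule linI)
  show "ergodic_avg z N (x + y) = ergodic_avg z N x + ergodic_avg z N y" for x y
    by (simp add: ergodic_avg_def linear_add[OF lin_U_power] scale_right_distrib sum.distrib)
  show "ergodic_avg z N (sm a x) = sm a (ergodic_avg z N x)" for a x
    by (simp add: ergodic_avg_def linear_scale[OF lin_U_power] scale_sum_right mult.commute)
qed

lemma nr_ergodic_avg_le:
  assumes "cmod z = 1"
  shows "nr (ergodic_avg z N x) \<le> nr x"
proof (cases "N = 0")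
  case False
  have "nr (ergodic_avg z N x) = (1 / real N) * nr (\<Sum>n<N. sm (cnj z ^ n) ((U ^^ n) x))"
    by (simp add: ergodic_avg_def nr_scale norm_divide)
  also have "nr (\<Sum>n<N. sm (cnj z ^ n) ((U ^^ n) x)) \<le> (\<Sum>n<N. nr (sm (cnj z ^ n) ((U ^^ n) x)))"
    by (rule nr_sum)
  also have "\<dots> = real N * nr x"
    using assms by (simp add: nr_scale norm_power)
  finally show ?thesis
    using False by (simp add: divide_simps)
qed (simp add: ergodic_avg_def)

lemma ergodic_avg_eigen:
  assumes "U v = sm w v"
  shows "ergodic_avg z N v = sm ((1 / of_nat N) * (\<Sum>n<N. (cnj z * w) ^ n)) v"
proof -
  have "(\<Sum>n<N. sm (cnj z ^ n) ((U ^^ n) v)) = sm (\<Sum>n<N. (cnj z * w) ^ n) v"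
    using U_power_eigen[OF assms] by (simp add: power_mult_distrib scale_sum_left)
  then show ?thesis
    by (simp add: ergodic_avg_def)
qed

lemma ergodic_avg_convergent:
  assumes z: "cmod z = 1"
  shows "\<exists>y. hlim (\<lambda>N. ergodic_avg z N x) y"
proof (rule convergent_of_eigenvectors[of "ergodic_avg z" 1])
  show "lin (ergodic_avg z N)" for N
    by (rule lin_ergodic_avg)
  show "nr (ergodic_avg z N x) \<le> 1 * nr x" for N x
    using nr_ergodic_avg_le[OF z] by simp
  fix v w assume v: "U v = sm w v"
  show "\<exists>L. hlim (\<lambda>N. ergodic_avg z N v) L"
  proof (cases "v = 0")
    case True
    then have "hlim (\<lambda>N. ergodic_avg z N v) 0"
      using hlim_const[of 0] by (simp add: linear_0[OF lin_ergodic_avg])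
    then show ?thesis
      by blast
  next
    case False
    then have "cmod (cnj z * w) \<le> 1"
      using z eigenvalue_unit[OF v] by (simp add: norm_mult)
    then have "hlim (\<lambda>N. sm ((1 / of_nat N) * (\<Sum>n<N. (cnj z * w) ^ n)) v)
        (sm (if cnj z * w = 1 then 1 else 0) v)"
      by (rule hlim_scale_left[OF cesaro_power_tendsto])
    then show ?thesis
      unfolding ergodic_avg_eigen[OF v] by blast
  qed
qed simp

text \<open>The ergodic averages telescope: applying \<open>U\<close> shifts the sum by one index.\<close>

lemma nr_ergodic_avg_defect_le:
  assumes z: "cmod z = 1"
  shows "nr (U (ergodic_avg z N x) - sm z (ergodic_avg z N x)) \<le> (1 / real N) * (2 * nr x)"
proof -
  define a where "a n = sm (cnj z ^ n) ((U ^^ n) x)" for n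
  have zz: "z * cnj z = 1"
    using cnj_mult_self_unit[OF z] by (simp add: mult.commute)
  have Ua: "U (a n) = sm z (a (Suc n))" for n
  proof -
    have "sm z (a (Suc n)) = sm (z * cnj z * cnj z ^ n) ((U ^^ Suc n) x)"
      by (simp add: a_def mult.assoc)
    also have "\<dots> = U (a n)"
      by (simp add: zz a_def linear_scale[OF lin_U])
    finally show ?thesis
      by simp
  qed
  have "(\<Sum>n<N. a (Suc n)) - (\<Sum>n<N. a n) = a N - a 0"
    by (induction N) (simp_all add: algebra_simps)
  moreover have "U (\<Sum>n<N. a n) = sm z (\<Sum>n<N. a (Suc n))"
    by (simp add: linear_sum[OF lin_U] Ua scale_sum_right)
  ultimately have "U (\<Sum>n<N. a n) - sm z (\<Sum>n<N. a n) = sm z (a N - a 0)"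
    by (simp add: scale_right_diff_distrib[symmetric])
  moreover have "U (ergodic_avg z N x) - sm z (ergodic_avg z N x)
      = sm (1 / of_nat N) (U (\<Sum>n<N. a n) - sm z (\<Sum>n<N. a n))"
    by (simp add: ergodic_avg_def a_def[symmetric] linear_scale[OF lin_U] scale_right_diff_distrib
        mult.commute)
  ultimately have "nr (U (ergodic_avg z N x) - sm z (ergodic_avg z N x)) = (1 / real N) * nr (a N - a 0)"
    using z by (simp add: nr_scale norm_divide)
  also have "\<dots> \<le> (1 / real N) * (2 * nr x)"
    using nr_diff_le[of "a N" "a 0"] z by (intro mult_left_mono) (simp_all add: a_def nr_scale norm_power)
  finally show ?thesis .
qed

lemma ergodic_avg_limit_eigen:
  assumes z: "cmod z = 1" and y: "hlim (\<lambda>N. ergodic_avg z N x) y"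
  shows "U y = sm z y"
proof -
  have "hlim (\<lambda>N. U (ergodic_avg z N x)) (U y)"
    using y unfolding hlim_def by (simp add: linear_diff[OF lin_U, symmetric])
  moreover have "hlim (\<lambda>N. U (ergodic_avg z N x)) (sm z y)"
  proof (rule hlim_bound)
    show "nr (U (ergodic_avg z N x) - sm z y) \<le> (1 / real N) * (2 * nr x) + nr (ergodic_avg z N x - y)" for N
    proof -
      have "nr (sm z (ergodic_avg z N x) - sm z y) = nr (ergodic_avg z N x - y)"
        using z by (simp add: scale_right_diff_distrib[symmetric] nr_scale)
      then show ?thesis
        using nr_ergodic_avg_defect_le[OF z, of N x]
          nr_triangle_diff[of "U (ergodic_avg z N x)" "sm z y" "sm z (ergodic_avg z N x)"] by linarith
    qed
    have "((\<lambda>N. (1 / real N) * (2 * nr x) + nr (ergodic_avg z N x - y)) \<longlongrightarrow> 0 * (2 * nr x) + 0) sequentially"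
      using y unfolding hlim_def by (intro tendsto_intros lim_const_over_n)
    then show "((\<lambda>N. (1 / real N) * (2 * nr x) + nr (ergodic_avg z N x - y)) \<longlongrightarrow> 0) sequentially"
      by simp
  qed
  ultimately show ?thesis
    by (rule hlim_unique)
qed

lemma ergodic_avg_limit_orthogonal:
  assumes z: "cmod z = 1" and y: "hlim (\<lambda>N. ergodic_avg z N x) y" and m: "U m = sm z m"
  shows "ip (x - y) m = 0"
proof -
  have zz: "z * cnj z = 1"
    using cnj_mult_self_unit[OF z] by (simp add: mult.commute)
  have ipn: "ip ((U ^^ n) x) m = z ^ n * ip x m" for n
  proof -
    have "ip x m = cnj (z ^ n) * ip ((U ^^ n) x) m"
      using ip_U_power[of n x m] U_power_eigen[OF m] by simp
    then have "z ^ n * ip x m = (z * cnj z) ^ n * ip ((U ^^ n) x) m"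
      by (simp add: power_mult_distrib)
    then show ?thesis
      using zz by simp
  qed
  have "ip (ergodic_avg z N x) m = ip x m" if "N \<ge> 1" for N
  proof -
    have "ip (ergodic_avg z N x) m = (1 / of_nat N) * (\<Sum>n<N. cnj z ^ n * (z ^ n * ip x m))"
      by (simp add: ergodic_avg_def ip_sum_left ipn)
    also have "\<dots> = (1 / of_nat N) * (\<Sum>n<N. ip x m)"
      by (simp add: mult.assoc[symmetric] power_mult_distrib[symmetric] cnj_mult_self_unit[OF z])
    also have "\<dots> = ip x m"
      using that by simp
    finally show ?thesis .
  qed
  then have "((\<lambda>N. ip (ergodic_avg z N x) m) \<longlongrightarrow> ip x m) sequentially"
    by (intro tendsto_eventually eventually_sequentiallyI[of 1]) auto
  then have "ip y m = ip x m"
    using hlim_ip[OF y] LIMSEQ_unique by blast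
  then show ?thesis
    by (simp add: ip_diff_left)
qed

lemma eigenspace_projection_exists:
  "\<exists>y \<in> eigenspace sm U z. \<forall>m \<in> eigenspace sm U z. ip (x - y) m = 0"
proof (cases "z \<in> sigma_pp sm U")
  case False
  then have "eigenspace sm U z = {0}"
    unfolding sigma_pp_def eigenspace_def by auto
  then show ?thesis
    by auto
next
  case True
  then have z: "cmod z = 1"
    by (rule sigma_pp_unit)
  obtain y where "hlim (\<lambda>N. ergodic_avg z N x) y"
    using ergodic_avg_convergent[OF z] by blast
  then show ?thesis
    using ergodic_avg_limit_eigen[OF z] ergodic_avg_limit_orthogonal[OF z] unfolding eigenspace_def by blast
qed

abbreviation E :: "complex \<Rightarrow> 'a \<Rightarrow> 'a" where
  "E \<equiv> Eproj sm ip U"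

lemma Eproj_unique:
  assumes "U y = sm z y" and "\<And>m. U m = sm z m \<Longrightarrow> ip (x - y) m = 0"
  shows "E z x = y"
  unfolding Eproj_def orth_proj_def
proof (rule the_equality)
  fix y' assume y': "y' \<in> eigenspace sm U z \<and> (\<forall>m\<in>eigenspace sm U z. ip (x - y') m = 0)"
  define d where "d = y' - y"
  have d: "U d = sm z d"
    using y' assms(1) by (simp add: d_def eigenspace_def linear_diff[OF lin_U] scale_right_diff_distrib)
  have "ip (x - y) d = 0" "ip (x - y') d = 0"
    using assms(2)[OF d] y' d unfolding eigenspace_def by auto
  then have "ip ((x - y) - (x - y')) d = 0"
    by (simp add: ip_diff_left)
  then have "ip d d = 0"
    by (simp add: d_def)
  then have "d = 0"
    by (rule ip_self_eq_0)
  then show "y' = y"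
    by (simp add: d_def)
qed (use assms in \<open>auto simp: eigenspace_def\<close>)

lemma Eproj_eigen: "U (E z x) = sm z (E z x)"
  and Eproj_orthogonal: "U m = sm z m \<Longrightarrow> ip (x - E z x) m = 0"
proof -
  obtain y where "U y = sm z y" "\<And>m. U m = sm z m \<Longrightarrow> ip (x - y) m = 0"
    using eigenspace_projection_exists[of z x] unfolding eigenspace_def by blast
  moreover from this have "E z x = y"
    by (rule Eproj_unique)
  ultimately show "U (E z x) = sm z (E z x)" and "U m = sm z m \<Longrightarrow> ip (x - E z x) m = 0"
    by auto
qed

lemma lin_Eproj: "lin (E z)"
proof (rule linI)
  show "E z (x + y) = E z x + E z y" for x y
  proof (rule Eproj_unique)
    show "U (E z x + E z y) = sm z (E z x + E z y)"
      by (simp add: linear_add[OF lin_U] Eproj_eigen scale_right_distrib)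
    fix m assume "U m = sm z m"
    then have "ip (x - E z x) m = 0" "ip (y - E z y) m = 0"
      by (simp_all add: Eproj_orthogonal)
    moreover have eq: "x + y - (E z x + E z y) = (x - E z x) + (y - E z y)"
      by (simp add: algebra_simps)
    ultimately show "ip (x + y - (E z x + E z y)) m = 0"
      unfolding eq by (simp add: ip_add_left)
  qed
  show "E z (sm a x) = sm a (E z x)" for a x
  proof (rule Eproj_unique)
    show "U (sm a (E z x)) = sm z (sm a (E z x))"
      by (simp add: linear_scale[OF lin_U] Eproj_eigen mult.commute)
    fix m assume "U m = sm z m"
    then show "ip (sm a x - sm a (E z x)) m = 0"
      by (simp add: scale_right_diff_distrib[symmetric] Eproj_orthogonal)
  qed
qed

lemma Eproj_eigenvector:
  assumes "U v = sm w v"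
  shows "E z v = (if w = z then v else 0)"
proof (rule Eproj_unique)
  show "U (if w = z then v else 0) = sm z (if w = z then v else 0)"
    using assms by simp
  show "ip (v - (if w = z then v else 0)) m = 0" if "U m = sm z m" for m
    using eigenvectors_orthogonal[OF assms that] by auto
qed

lemma U_power_Eproj: "(U ^^ n) (E z x) = sm (z ^ n) (E z x)"
  by (rule U_power_eigen[OF Eproj_eigen])

definition proj_sum :: "complex set \<Rightarrow> 'a \<Rightarrow> 'a" where
  "proj_sum Q x = (\<Sum>z\<in>Q. E z x)"

lemma lin_proj_sum: "lin (proj_sum Q)"
proof (rule linI)
  show "proj_sum Q (x + y) = proj_sum Q x + proj_sum Q y" for x y
    by (simp add: proj_sum_def linear_add[OF lin_Eproj] sum.distrib)
  show "proj_sum Q (sm a x) = sm a (proj_sum Q x)" for a x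
    by (simp add: proj_sum_def linear_scale[OF lin_Eproj] scale_sum_right)
qed

lemma U_power_proj_sum: "(U ^^ n) (proj_sum Q x) = (\<Sum>z\<in>Q. sm (z ^ n) (E z x))"
  by (simp add: proj_sum_def linear_sum[OF lin_U_power] U_power_Eproj)

lemma proj_sum_eigenvector:
  assumes "finite Q" and "U v = sm w v" and "w \<in> Q"
  shows "proj_sum Q v = v"
  using assms by (simp add: proj_sum_def Eproj_eigenvector[OF assms(2)])

lemma ip_proj_sum_eigenvector:
  assumes "finite Q" and "w \<in> Q" and "U m = sm w m"
  shows "ip (proj_sum Q x) m = ip x m"
proof -
  have "ip (E z x) m = (if z = w then ip x m else 0)" for z
    using Eproj_orthogonal[OF assms(3), of x] eigenvectors_orthogonal[OF Eproj_eigen assms(3)]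
    by (auto simp: ip_diff_left)
  then show ?thesis
    using assms(1,2) by (simp add: proj_sum_def ip_sum_left)
qed

lemma proj_sum_orthogonal_self:
  assumes "finite Q"
  shows "ip (proj_sum Q x) (x - proj_sum Q x) = 0"
proof -
  have "ip (E z x) (x - proj_sum Q x) = 0" if "z \<in> Q" for z
    using ip_proj_sum_eigenvector[OF assms that Eproj_eigen[of z x], of x]
      ip_commute[of "E z x" "x - proj_sum Q x"] by (simp add: ip_diff_left)
  moreover have "ip (proj_sum Q x) y = (\<Sum>z\<in>Q. ip (E z x) y)" for y
    by (simp add: proj_sum_def ip_sum_left)
  ultimately show ?thesis
    by simp
qed

lemma nr_proj_sum_le: "finite Q \<Longrightarrow> nr (proj_sum Q x) \<le> nr x"
  by (rule orthogonal_nr_le(1)[OF proj_sum_orthogonal_self])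

lemma nr_proj_sum_residual_le: "finite Q \<Longrightarrow> nr (x - proj_sum Q x) \<le> nr x"
  by (rule orthogonal_nr_le(2)[OF proj_sum_orthogonal_self])

lemma proj_sum_approx:
  assumes "e > 0"
  shows "\<exists>Q0. finite Q0 \<and> Q0 \<subseteq> sigma_pp sm U \<and>
    (\<forall>Q. finite Q \<longrightarrow> Q0 \<subseteq> Q \<longrightarrow> nr (x - proj_sum Q x) < e)"
proof -
  obtain y where y_span: "y \<in> hspan sm {v. \<exists>z. U v = sm z v}" and y: "nr (x - y) < e"
    using almost_periodic assms unfolding almost_periodic_def by blast
  obtain I :: "nat set" and c v z where I: "finite I" and v: "\<forall>i\<in>I. U (v i) = sm (z i) (v i)"
    and y_eq: "y = (\<Sum>i\<in>I. sm (c i) (v i))"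
    using hspan_eigenvectors_sum[OF y_span] by (elim exE conjE)
  define Q0 where "Q0 = z ` {i\<in>I. v i \<noteq> 0}"
  have "finite Q0" "Q0 \<subseteq> sigma_pp sm U"
    using I v by (auto simp: Q0_def sigma_pp_def)
  moreover have "nr (x - proj_sum Q x) < e" if Q: "finite Q" "Q0 \<subseteq> Q" for Q
  proof -
    have "proj_sum Q (v i) = v i" if i: "i \<in> I" for i
    proof (cases "v i = 0")
      case False
      then have "z i \<in> Q"
        using Q(2) i unfolding Q0_def by blast
      then show ?thesis
        using proj_sum_eigenvector[OF Q(1)] v i by blast
    qed (simp add: linear_0[OF lin_proj_sum])
    then have "proj_sum Q y = y"
      by (simp add: y_eq linear_sum[OF lin_proj_sum] linear_scale[OF lin_proj_sum])
    then have eq: "x - proj_sum Q x = (x - y) - proj_sum Q (x - y)"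
      by (simp add: linear_diff[OF lin_proj_sum])
    have "nr (x - proj_sum Q x) \<le> nr (x - y)"
      unfolding eq by (rule nr_proj_sum_residual_le[OF Q(1)])
    then show ?thesis
      using y by linarith
  qed
  ultimately show ?thesis
    by blast
qed

lemma nr_U_power_proj_sum_diff_le:
  "nr ((U ^^ n) (proj_sum Q x) - (U ^^ m) (proj_sum Q x)) \<le> (\<Sum>z\<in>Q. cmod (z ^ n - z ^ m) * nr (E z x))"
proof -
  have "(U ^^ n) (proj_sum Q x) - (U ^^ m) (proj_sum Q x) = (\<Sum>z\<in>Q. sm (z ^ n - z ^ m) (E z x))"
    by (simp add: U_power_proj_sum scale_left_diff_distrib sum_subtractf)
  then show ?thesis
    using nr_sum[of "\<lambda>z. sm (z ^ n - z ^ m) (E z x)" Q] by (simp add: nr_scale)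
qed

text \<open>Approximate \<open>x\<close> by finitely many eigencomponents; on these \<open>U ^^ n\<close> acts through the
  powers \<open>z ^ n\<close>, which take only finitely many values up to any \<open>\<delta>\<close>.\<close>

lemma precompact_orbit: "precompact (range (\<lambda>n. (U ^^ n) x))"
  unfolding precompact_def
proof (intro allI impI)
  fix e :: real assume e: "e > 0"
  then obtain Q where Q: "finite Q" "Q \<subseteq> sigma_pp sm U" and xQ: "nr (x - proj_sum Q x) < e / 3"
    using proj_sum_approx[of "e / 3" x] by auto
  define B where "B = (\<Sum>z\<in>Q. nr (E z x)) + 1"
  have B: "B > 0" "(\<Sum>z\<in>Q. nr (E z x)) \<le> B"
    by (simp_all add: B_def sum_nonneg add_nonneg_pos)
  have unit: "cmod z \<le> 1" if "z \<in> Q" for z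
    using Q(2) that sigma_pp_unit by auto
  have "e / (3 * B) > 0"
    using e B by simp
  then obtain M where M: "finite M" "\<forall>n. \<exists>m\<in>M. \<forall>z\<in>Q. cmod (z ^ n - z ^ m) < e / (3 * B)"
    using powers_finite_net[OF Q(1) unit] by blast
  have "\<exists>m\<in>M. nr ((U ^^ n) x - (U ^^ m) x) < e" for n
  proof -
    obtain m where "m \<in> M" and close: "\<forall>z\<in>Q. cmod (z ^ n - z ^ m) < e / (3 * B)"
      using M(2) by blast
    have "nr ((U ^^ n) (proj_sum Q x) - (U ^^ m) (proj_sum Q x)) \<le> (\<Sum>z\<in>Q. cmod (z ^ n - z ^ m) * nr (E z x))"
      by (rule nr_U_power_proj_sum_diff_le)
    also have "\<dots> \<le> (\<Sum>z\<in>Q. e / (3 * B) * nr (E z x))"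
      using close by (intro sum_mono mult_right_mono) auto
    also have "\<dots> = e / (3 * B) * (\<Sum>z\<in>Q. nr (E z x))"
      by (simp add: sum_distrib_left)
    also have "\<dots> \<le> e / (3 * B) * B"
      using B e by (intro mult_left_mono) auto
    also have "\<dots> = e / 3"
      using B by simp
    finally have "nr ((U ^^ n) x - (U ^^ m) x) < e"
      using nr_U_power_diff_le[of n x m "proj_sum Q x"] xQ by linarith
    then show ?thesis
      using \<open>m \<in> M\<close> by blast
  qed
  then show "\<exists>F. finite F \<and> (\<forall>y\<in>range (\<lambda>n. (U ^^ n) x). \<exists>y'\<in>F. nr (y - y') < e)"
    using M(1) by (intro exI[of _ "(\<lambda>m. (U ^^ m) x) ` M"]) auto
qed

lemma precompact_orbits:
  assumes "precompact S"
  shows "precompact {(U ^^ n) v | n v. v \<in> S}"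
  unfolding precompact_def
proof (intro allI impI)
  fix e :: real assume e: "e > 0"
  obtain F where F: "finite F" "\<forall>v\<in>S. \<exists>y\<in>F. nr (v - y) < e / 2"
    using precompactD[OF assms, of "e / 2"] e by auto
  have "\<forall>y\<in>F. \<exists>G. finite G \<and> (\<forall>w\<in>range (\<lambda>n. (U ^^ n) y). \<exists>g\<in>G. nr (w - g) < e / 2)"
    using precompactD[OF precompact_orbit, of "e / 2"] e by auto
  then obtain G where G: "\<And>y. y \<in> F \<Longrightarrow> finite (G y) \<and> (\<forall>w\<in>range (\<lambda>n. (U ^^ n) y). \<exists>g\<in>G y. nr (w - g) < e / 2)"
    by metis
  have "\<exists>g\<in>(\<Union>y\<in>F. G y). nr ((U ^^ n) v - g) < e" if v: "v \<in> S" for n v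
  proof -
    obtain y where y: "y \<in> F" "nr (v - y) < e / 2"
      using F v by blast
    obtain g where g: "g \<in> G y" "nr ((U ^^ n) y - g) < e / 2"
      using G[OF y(1)] by blast
    have "nr ((U ^^ n) v - (U ^^ n) y) = nr (v - y)"
      by (simp add: linear_diff[OF lin_U_power, symmetric])
    then have "nr ((U ^^ n) v - g) < e"
      using nr_triangle_diff[of "(U ^^ n) v" g "(U ^^ n) y"] y g by linarith
    then show ?thesis
      using g(1) y(1) by blast
  qed
  moreover have "finite (\<Union>y\<in>F. G y)"
    using F(1) G by blast
  ultimately show "\<exists>F'. finite F' \<and> (\<forall>x\<in>{(U ^^ n) v | n v. v \<in> S}. \<exists>y\<in>F'. nr (x - y) < e)"
    by blast
qed

lemma proj_sum_approx_uniform: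
  assumes "precompact S" and "e > 0"
  shows "\<exists>Q0. finite Q0 \<and> Q0 \<subseteq> sigma_pp sm U \<and>
    (\<forall>Q. finite Q \<longrightarrow> Q0 \<subseteq> Q \<longrightarrow> (\<forall>w\<in>S. nr (w - proj_sum Q w) < e))"
proof -
  obtain F where F: "finite F" "\<forall>w\<in>S. \<exists>y\<in>F. nr (w - y) < e / 2"
    using precompactD[OF assms(1), of "e / 2"] assms(2) by auto
  have "\<forall>y\<in>F. \<exists>Q0. finite Q0 \<and> Q0 \<subseteq> sigma_pp sm U \<and>
      (\<forall>Q. finite Q \<longrightarrow> Q0 \<subseteq> Q \<longrightarrow> nr (y - proj_sum Q y) < e / 2)"
    using proj_sum_approx[of "e / 2"] assms(2) by simp
  then obtain Qf where Qf: "\<And>y. y \<in> F \<Longrightarrow> finite (Qf y) \<and> Qf y \<subseteq> sigma_pp sm U \<and>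
      (\<forall>Q. finite Q \<longrightarrow> Qf y \<subseteq> Q \<longrightarrow> nr (y - proj_sum Q y) < e / 2)"
    by metis
  have "nr (w - proj_sum Q w) < e" if Q: "finite Q" "(\<Union>y\<in>F. Qf y) \<subseteq> Q" and w: "w \<in> S" for Q w
  proof -
    obtain y where y: "y \<in> F" "nr (w - y) < e / 2"
      using F w by blast
    then have "nr (y - proj_sum Q y) < e / 2"
      using Qf Q by blast
    moreover have eq: "w - proj_sum Q w = ((w - y) - proj_sum Q (w - y)) + (y - proj_sum Q y)"
      by (simp add: linear_diff[OF lin_proj_sum] algebra_simps)
    have "nr (w - proj_sum Q w) \<le> nr ((w - y) - proj_sum Q (w - y)) + nr (y - proj_sum Q y)"
      unfolding eq by (rule nr_triangle)
    ultimately show ?thesis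
      using nr_proj_sum_residual_le[OF Q(1), of "w - y"] y(2) by linarith
  qed
  moreover have "finite (\<Union>y\<in>F. Qf y)" "(\<Union>y\<in>F. Qf y) \<subseteq> sigma_pp sm U"
    using F(1) Qf by auto
  ultimately show ?thesis
    by blast
qed

end

section \<open>Alternating products of operators\<close>

lemma alt_cong:
  "(\<And>i. i \<in> {1..m} \<Longrightarrow> B i = B' i) \<Longrightarrow> (\<And>i. i \<in> {1..m} \<Longrightarrow> A i = A' i) \<Longrightarrow>
    alt m B A = alt m B' A'"
  by (induction m) auto

lemma word_eq_alt:
  assumes "k \<ge> 1"
  shows "word k B A = alt (2 * k) B (A(2 * k := id))"
proof -
  obtain j where j: "2 * k = Suc j"
    using assms by (cases "2 * k") auto
  have "alt j B (A(Suc j := id)) = alt j B A"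
    by (rule alt_cong) auto
  then show ?thesis
    unfolding word_def j by simp
qed

lemma sum_PiE_insert:
  assumes "x \<notin> S"
  shows "(\<Sum>g\<in>PiE (insert x S) T. f g) = (\<Sum>(y, g)\<in>T x \<times> PiE S T. f (g(x := y)))"
  unfolding PiE_insert_eq by (subst sum.reindex[OF inj_combinator[OF assms]]) (simp add: comp_def case_prod_unfold)

context hilbert
begin

lemma lin_alt:
  assumes "\<And>i. i \<in> {1..m} \<Longrightarrow> lin (B i) \<and> lin (A i)"
  shows "lin (alt m B A)"
  using assms
proof (induction m)
  case (Suc m)
  then have "lin (alt m B A)" "lin (B (Suc m))" "lin (A (Suc m))"
    by auto
  then show ?case
    unfolding alt.simps by (metis Vector_Spaces.linear_compose)
qed (simp add: linear_id)

lemma nr_alt_le: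
  assumes "\<And>i x. i \<in> {1..m} \<Longrightarrow> nr (B i x) \<le> nr x"
    and "\<And>i x. i \<in> {1..m} \<Longrightarrow> nr (A i x) \<le> C * nr x" and "C \<ge> 0"
  shows "nr (alt m B A x) \<le> C ^ m * nr x"
  using assms(1,2)
proof (induction m arbitrary: x)
  case (Suc m)
  have "nr (alt (Suc m) B A x) \<le> C ^ m * nr (B (Suc m) (A (Suc m) x))"
    using Suc by simp
  also have "\<dots> \<le> C ^ m * (C * nr x)"
    using Suc.prems(1)[of "Suc m" "A (Suc m) x"] Suc.prems(2)[of "Suc m" x] assms(3)
    by (intro mult_left_mono) auto
  finally show ?case
    by (simp add: mult_ac)
qed simp

lemma nr_alt_diff_le:
  assumes "\<And>i. i \<in> {1..m} \<Longrightarrow> lin (B i) \<and> lin (A i)" and "\<And>i x. i \<in> {1..m} \<Longrightarrow> nr (B i x) \<le> nr x"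
    and "\<And>i x. i \<in> {1..m} \<Longrightarrow> nr (A i x) \<le> C * nr x" and "C \<ge> 0"
  shows "nr (alt m B A y - alt m B A y') \<le> C ^ m * nr (y - y')"
proof -
  have "lin (alt m B A)"
    by (rule lin_alt) (use assms(1) in auto)
  then have "nr (alt m B A y - alt m B A y') = nr (alt m B A (y - y'))"
    by (simp add: linear_diff)
  also have "\<dots> \<le> C ^ m * nr (y - y')"
    by (rule nr_alt_le) (use assms(2-4) in auto)
  finally show ?thesis .
qed

text \<open>\<open>K j\<close> is meant to contain the partial products after \<open>j\<close> factors (the innermost factor
  \<open>B m (A m _)\<close> acts first); each replacement error is amplified by at most \<open>C ^ m\<close>.\<close>

lemma alt_perturb_bound:
  assumes lin: "\<And>i. i \<in> {1..m} \<Longrightarrow> lin (A i) \<and> lin (B' i)"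
    and B'_le: "\<And>i x. i \<in> {1..m} \<Longrightarrow> nr (B' i x) \<le> nr x"
    and A_le: "\<And>i x. i \<in> {1..m} \<Longrightarrow> nr (A i x) \<le> C * nr x" and C: "C \<ge> 1"
    and step: "\<And>i j v. i \<in> {1..m} \<Longrightarrow> j < m \<Longrightarrow> v \<in> K j \<Longrightarrow> B i (A i v) \<in> K (Suc j)"
    and err: "\<And>i j v. i \<in> {1..m} \<Longrightarrow> j < m \<Longrightarrow> v \<in> K j \<Longrightarrow> nr (B i (A i v) - B' i (A i v)) \<le> \<epsilon>"
    and x: "x \<in> K 0"
  shows "nr (alt m B A x - alt m B' A x) \<le> real m * C ^ m * \<epsilon>"
  using lin B'_le A_le step err x
proof (induction m arbitrary: x K)
  case (Suc m)
  define y where "y = B (Suc m) (A (Suc m) x)"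
  define y' where "y' = B' (Suc m) (A (Suc m) x)"
  have y_y': "nr (y - y') \<le> \<epsilon>"
    unfolding y_def y'_def using Suc.prems(5)[of "Suc m" 0 x] Suc.prems(6) by simp
  have IH: "nr (alt m B A y - alt m B' A y) \<le> real m * C ^ m * \<epsilon>"
  proof (rule Suc.IH[where x = y and K = "\<lambda>j. K (Suc j)"])
    show "B i (A i v) \<in> K (Suc (Suc j))" if "i \<in> {1..m}" "j < m" "v \<in> K (Suc j)" for i j v
      using Suc.prems(4)[of i "Suc j" v] that by simp
    show "nr (B i (A i v) - B' i (A i v)) \<le> \<epsilon>" if "i \<in> {1..m}" "j < m" "v \<in> K (Suc j)" for i j v
      using Suc.prems(5)[of i "Suc j" v] that by simp
    show "y \<in> K (Suc 0)"
      unfolding y_def using Suc.prems(4)[of "Suc m" 0 x] Suc.prems(6) by simp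
  qed (use Suc.prems(1-3) in auto)
  have "nr (alt m B' A y - alt m B' A y') \<le> C ^ m * nr (y - y')"
    by (rule nr_alt_diff_le) (use Suc.prems(1-3) C in auto)
  also have "\<dots> \<le> C ^ m * \<epsilon>"
    using y_y' C by (intro mult_left_mono) auto
  finally have "nr (alt m B' A y - alt m B' A y') \<le> C ^ m * \<epsilon>" .
  moreover have "alt (Suc m) B A x - alt (Suc m) B' A x = (alt m B A y - alt m B' A y) + (alt m B' A y - alt m B' A y')"
    by (simp add: y_def y'_def)
  ultimately have "nr (alt (Suc m) B A x - alt (Suc m) B' A x) \<le> real m * C ^ m * \<epsilon> + C ^ m * \<epsilon>"
    using nr_triangle[of "alt m B A y - alt m B' A y" "alt m B' A y - alt m B' A y'"] IH by simp
  also have "\<dots> \<le> real (Suc m) * C ^ Suc m * \<epsilon>"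
  proof -
    have "C ^ m \<le> C ^ Suc m" "\<epsilon> \<ge> 0"
      using C y_y' by (simp_all add: power_increasing order_trans[OF nr_nonneg])
    then have "C ^ m * \<epsilon> \<le> C ^ Suc m * \<epsilon>" "real m * (C ^ m * \<epsilon>) \<le> real m * (C ^ Suc m * \<epsilon>)"
      by (simp_all add: mult_right_mono mult_left_mono)
    then show ?thesis
      by (simp add: algebra_simps)
  qed
  finally show ?case .
qed simp

lemma alt_sum_expand:
  assumes "\<And>i z. i \<in> {1..m} \<Longrightarrow> lin (B i z)" and "\<And>i. i \<in> {1..m} \<Longrightarrow> lin (A i)"
  shows "alt m (\<lambda>i v. \<Sum>z\<in>Qs i. B i z v) A x = (\<Sum>c\<in>PiE {1..m} Qs. alt m (\<lambda>i. B i (c i)) A x)"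
  using assms
proof (induction m arbitrary: x)
  case (Suc m)
  let ?B = "\<lambda>i v. \<Sum>z\<in>Qs i. B i z v"
  have "lin (alt m ?B A)"
    by (rule lin_alt) (use Suc.prems in \<open>auto intro: linear_compose_sum\<close>)
  have upd: "alt (Suc m) (\<lambda>i. B i ((c(Suc m := z)) i)) A x = alt m (\<lambda>i. B i (c i)) A (B (Suc m) z (A (Suc m) x))"
    for c z
  proof -
    have "alt m (\<lambda>i. B i ((c(Suc m := z)) i)) A = alt m (\<lambda>i. B i (c i)) A"
      by (rule alt_cong) auto
    then show ?thesis
      by simp
  qed
  have ins: "{1..Suc m} = insert (Suc m) {1..m}" and notin: "Suc m \<notin> {1..m}"
    by auto
  have "alt (Suc m) ?B A x = (\<Sum>z\<in>Qs (Suc m). alt m ?B A (B (Suc m) z (A (Suc m) x)))"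
    by (simp add: linear_sum[OF \<open>lin (alt m ?B A)\<close>])
  also have "\<dots> = (\<Sum>z\<in>Qs (Suc m). \<Sum>c\<in>PiE {1..m} Qs. alt m (\<lambda>i. B i (c i)) A (B (Suc m) z (A (Suc m) x)))"
    using Suc by simp
  also have "\<dots> = (\<Sum>(z, c)\<in>Qs (Suc m) \<times> PiE {1..m} Qs. alt (Suc m) (\<lambda>i. B i ((c(Suc m := z)) i)) A x)"
    unfolding upd by (rule sum.cartesian_product)
  also have "\<dots> = (\<Sum>c\<in>PiE {1..Suc m} Qs. alt (Suc m) (\<lambda>i. B i (c i)) A x)"
    unfolding ins sum_PiE_insert[OF notin] ..
  finally show ?case .
qed simp

lemma alt_scale:
  assumes "\<And>i. i \<in> {1..m} \<Longrightarrow> lin (B i) \<and> lin (A i)"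
  shows "alt m (\<lambda>i v. sm (f i) (B i v)) A x = sm (\<Prod>i\<in>{1..m}. f i) (alt m B A x)"
  using assms
proof (induction m arbitrary: x)
  case (Suc m)
  have "lin (alt m B A)"
    by (rule lin_alt) (use Suc.prems in auto)
  with Suc show ?case
    by (simp add: linear_scale mult.commute)
qed simp

end

section \<open>Pair partitions\<close>

definition fibre :: "nat \<Rightarrow> (nat \<Rightarrow> nat) \<Rightarrow> nat \<Rightarrow> nat set" where
  "fibre k \<alpha> l = {i \<in> {1..2 * k}. \<alpha> i = l}"

definition first_pos :: "nat \<Rightarrow> (nat \<Rightarrow> nat) \<Rightarrow> nat \<Rightarrow> nat" where
  "first_pos k \<alpha> l = Min (fibre k \<alpha> l)"

definition second_pos :: "nat \<Rightarrow> (nat \<Rightarrow> nat) \<Rightarrow> nat \<Rightarrow> nat" where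
  "second_pos k \<alpha> l = Max (fibre k \<alpha> l)"

definition is_first :: "nat \<Rightarrow> (nat \<Rightarrow> nat) \<Rightarrow> nat \<Rightarrow> bool" where
  "is_first k \<alpha> i \<longleftrightarrow> (\<exists>j\<in>{1..2 * k}. \<alpha> j = \<alpha> i \<and> i < j)"

definition paired :: "nat \<Rightarrow> (nat \<Rightarrow> nat) \<Rightarrow> (nat \<Rightarrow> complex) \<Rightarrow> bool" where
  "paired k \<alpha> c \<longleftrightarrow> (\<forall>l\<in>{1..k}. c (first_pos k \<alpha> l) * c (second_pos k \<alpha> l) = 1)"

lemma zsharp_is_first: "zsharp k \<alpha> z i = (if is_first k \<alpha> i then z (\<alpha> i) else cnj (z (\<alpha> i)))"
  by (simp add: zsharp_def is_first_def)

context
  fixes k :: nat and \<alpha> :: "nat \<Rightarrow> nat"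
  assumes pp: "pair_partition k \<alpha>"
begin

lemma pair_partition_range: "i \<in> {1..2 * k} \<Longrightarrow> \<alpha> i \<in> {1..k}"
  using pp unfolding pair_partition_def by blast

lemma fibre_eq:
  assumes "l \<in> {1..k}"
  shows "fibre k \<alpha> l = {first_pos k \<alpha> l, second_pos k \<alpha> l}" and "first_pos k \<alpha> l < second_pos k \<alpha> l"
proof -
  have "card (fibre k \<alpha> l) = 2"
    using pp assms unfolding pair_partition_def fibre_def by blast
  then obtain a b where ab: "fibre k \<alpha> l = {a, b}" "a \<noteq> b"
    unfolding card_2_iff by blast
  then have "first_pos k \<alpha> l = min a b" "second_pos k \<alpha> l = max a b"
    unfolding first_pos_def second_pos_def by auto
  then show "fibre k \<alpha> l = {first_pos k \<alpha> l, second_pos k \<alpha> l}" "first_pos k \<alpha> l < second_pos k \<alpha> l"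
    using ab by (auto simp: min_def max_def)
qed

lemma first_pos_mem: "l \<in> {1..k} \<Longrightarrow> first_pos k \<alpha> l \<in> {1..2 * k} \<and> \<alpha> (first_pos k \<alpha> l) = l"
  and second_pos_mem: "l \<in> {1..k} \<Longrightarrow> second_pos k \<alpha> l \<in> {1..2 * k} \<and> \<alpha> (second_pos k \<alpha> l) = l"
  using fibre_eq(1) unfolding fibre_def by blast+

lemma pos_cases: "i \<in> {1..2 * k} \<Longrightarrow> i = first_pos k \<alpha> (\<alpha> i) \<or> i = second_pos k \<alpha> (\<alpha> i)"
  using fibre_eq(1)[OF pair_partition_range] unfolding fibre_def by blast

lemma is_first_first_pos: "l \<in> {1..k} \<Longrightarrow> is_first k \<alpha> (first_pos k \<alpha> l)"
  unfolding is_first_def using first_pos_mem second_pos_mem fibre_eq(2) by fastforce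

lemma not_is_first_second_pos:
  assumes "l \<in> {1..k}"
  shows "\<not> is_first k \<alpha> (second_pos k \<alpha> l)"
proof
  assume "is_first k \<alpha> (second_pos k \<alpha> l)"
  then obtain j where "j \<in> fibre k \<alpha> l" "second_pos k \<alpha> l < j"
    unfolding is_first_def fibre_def using second_pos_mem[OF assms] by auto
  then show False
    using fibre_eq[OF assms] by auto
qed

lemma zsharp_first_pos: "l \<in> {1..k} \<Longrightarrow> zsharp k \<alpha> z (first_pos k \<alpha> l) = z l"
  and zsharp_second_pos: "l \<in> {1..k} \<Longrightarrow> zsharp k \<alpha> z (second_pos k \<alpha> l) = cnj (z l)"
  using is_first_first_pos not_is_first_second_pos first_pos_mem second_pos_mem
  by (simp_all add: zsharp_is_first)

lemma paired_zsharp: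
  assumes "\<And>l. l \<in> {1..k} \<Longrightarrow> cmod (z l) = 1"
  shows "paired k \<alpha> (zsharp k \<alpha> z)"
  unfolding paired_def using assms cnj_mult_self_unit
  by (simp add: zsharp_first_pos zsharp_second_pos mult.commute)

lemma paired_imp_zsharp:
  assumes "paired k \<alpha> c" and "\<And>l. l \<in> {1..k} \<Longrightarrow> cmod (c (first_pos k \<alpha> l)) = 1"
    and "i \<in> {1..2 * k}"
  shows "c i = zsharp k \<alpha> (\<lambda>l. c (first_pos k \<alpha> l)) i"
proof -
  have l: "\<alpha> i \<in> {1..k}"
    using assms(3) by (rule pair_partition_range)
  from pos_cases[OF assms(3)] show ?thesis
  proof
    assume i: "i = first_pos k \<alpha> (\<alpha> i)"
    show ?thesis
      using zsharp_first_pos[OF l, of "\<lambda>l. c (first_pos k \<alpha> l)"] i by metis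
  next
    assume i: "i = second_pos k \<alpha> (\<alpha> i)"
    have "c (first_pos k \<alpha> (\<alpha> i)) * c (second_pos k \<alpha> (\<alpha> i)) = 1"
      using assms(1) l unfolding paired_def by blast
    then have "c (second_pos k \<alpha> (\<alpha> i)) = cnj (c (first_pos k \<alpha> (\<alpha> i)))"
      using unit_inverse_eq_cnj assms(2)[OF l] by blast
    then show ?thesis
      using zsharp_second_pos[OF l, of "\<lambda>l. c (first_pos k \<alpha> l)"] i by metis
  qed
qed

lemma prod_pairs:
  fixes c :: "nat \<Rightarrow> 'b::comm_monoid_mult"
  shows "(\<Prod>i\<in>{1..2 * k}. c i ^ n (\<alpha> i)) = (\<Prod>l\<in>{1..k}. (c (first_pos k \<alpha> l) * c (second_pos k \<alpha> l)) ^ n l)"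
proof -
  have "(\<Prod>i\<in>{1..2 * k}. c i ^ n (\<alpha> i)) = (\<Prod>l\<in>{1..k}. \<Prod>i\<in>fibre k \<alpha> l. c i ^ n (\<alpha> i))"
    unfolding fibre_def by (rule prod.group[symmetric]) (use pair_partition_range in auto)
  also have "\<dots> = (\<Prod>l\<in>{1..k}. (c (first_pos k \<alpha> l) * c (second_pos k \<alpha> l)) ^ n l)"
  proof (rule prod.cong)
    fix l assume l: "l \<in> {1..k}"
    then show "(\<Prod>i\<in>fibre k \<alpha> l. c i ^ n (\<alpha> i)) = (c (first_pos k \<alpha> l) * c (second_pos k \<alpha> l)) ^ n l"
      using fibre_eq[OF l] first_pos_mem[OF l] second_pos_mem[OF l] by (simp add: power_mult_distrib)
  qed simp
  finally show ?thesis .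
qed

lemma cesaro_prod_pairs:
  fixes c :: "nat \<Rightarrow> complex"
  shows "(1 / of_nat N ^ k) * (\<Sum>n\<in>PiE {1..k} (\<lambda>_. {..<N}). \<Prod>i\<in>{1..2 * k}. c i ^ n (\<alpha> i))
    = (\<Prod>l\<in>{1..k}. (1 / of_nat N) * (\<Sum>m<N. (c (first_pos k \<alpha> l) * c (second_pos k \<alpha> l)) ^ m))"
proof -
  have sum_eq: "(\<Sum>n\<in>PiE {1..k} (\<lambda>_. {..<N}). \<Prod>i\<in>{1..2 * k}. c i ^ n (\<alpha> i))
      = (\<Prod>l\<in>{1..k}. \<Sum>m<N. (c (first_pos k \<alpha> l) * c (second_pos k \<alpha> l)) ^ m)"
    unfolding prod_pairs by (rule prod_sum_PiE[symmetric]) auto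
  have factor_eq: "(1 / of_nat N ^ k :: complex) = (\<Prod>l\<in>{1..k}. 1 / of_nat N)"
    by (simp add: power_one_over)
  show ?thesis
    unfolding sum_eq factor_eq by (rule prod.distrib[symmetric])
qed

lemma cesaro_pairs_tendsto:
  fixes c :: "nat \<Rightarrow> complex"
  assumes "\<And>i. i \<in> {1..2 * k} \<Longrightarrow> cmod (c i) \<le> 1"
  shows "((\<lambda>N. (1 / of_nat N ^ k) * (\<Sum>n\<in>PiE {1..k} (\<lambda>_. {..<N}). \<Prod>i\<in>{1..2 * k}. c i ^ n (\<alpha> i)))
    \<longlongrightarrow> (if paired k \<alpha> c then 1 else 0)) sequentially"
proof -
  have "((\<lambda>N. \<Prod>l\<in>{1..k}. (1 / of_nat N) * (\<Sum>m<N. (c (first_pos k \<alpha> l) * c (second_pos k \<alpha> l)) ^ m))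
      \<longlongrightarrow> (\<Prod>l\<in>{1..k}. if c (first_pos k \<alpha> l) * c (second_pos k \<alpha> l) = 1 then 1 else 0)) sequentially"
  proof (rule tendsto_prod)
    fix l assume l: "l \<in> {1..k}"
    have "cmod (c (first_pos k \<alpha> l) * c (second_pos k \<alpha> l)) \<le> 1"
      using assms first_pos_mem[OF l] second_pos_mem[OF l] by (simp add: norm_mult mult_le_one)
    then show "((\<lambda>N. (1 / of_nat N) * (\<Sum>m<N. (c (first_pos k \<alpha> l) * c (second_pos k \<alpha> l)) ^ m))
        \<longlongrightarrow> (if c (first_pos k \<alpha> l) * c (second_pos k \<alpha> l) = 1 then 1 else 0)) sequentially"
      by (rule cesaro_power_tendsto)
  qed
  moreover have "(\<Prod>l\<in>I. if P l then (1::complex) else 0) = (if \<forall>l\<in>I. P l then 1 else 0)"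
    if "finite I" for I and P :: "nat \<Rightarrow> bool"
    using that by (induction I rule: finite_induct) auto
  ultimately show ?thesis
    unfolding cesaro_prod_pairs paired_def by simp
qed

end

section \<open>Cesaro averages of words in the powers of an almost periodic unitary\<close>

locale pair_cesaro = almost_periodic_unitary +
  fixes k :: nat and \<alpha> :: "nat \<Rightarrow> nat" and A :: "nat \<Rightarrow> 'a \<Rightarrow> 'a"
  assumes k: "k \<ge> 1" and pp: "pair_partition k \<alpha>"
    and bounded_A: "\<forall>i\<in>{1..2 * k - 1}. bounded_op sm ip (A i)"
begin

definition Apad :: "nat \<Rightarrow> 'a \<Rightarrow> 'a" where
  "Apad = A(2 * k := id)"

lemma lin_Apad: "i \<in> {1..2 * k} \<Longrightarrow> lin (Apad i)"
  using bounded_A bounded_op_lin by (cases "i = 2 * k") (auto simp: Apad_def linear_id)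

lemma Apad_bound: "\<exists>C \<ge> 1. \<forall>i\<in>{1..2 * k}. \<forall>x. nr (Apad i x) \<le> C * nr x"
proof -
  have "\<forall>i\<in>{1..2 * k - 1}. \<exists>C. \<forall>x. nr (A i x) \<le> C * nr x"
    using bounded_A unfolding bounded_op_def by blast
  then obtain Cf where Cf: "\<And>i x. i \<in> {1..2 * k - 1} \<Longrightarrow> nr (A i x) \<le> Cf i * nr x"
    by metis
  define C where "C = 1 + (\<Sum>i\<in>{1..2 * k - 1}. \<bar>Cf i\<bar>)"
  have C: "C \<ge> 1" "\<And>i. i \<in> {1..2 * k - 1} \<Longrightarrow> Cf i \<le> C"
    unfolding C_def using member_le_sum[of _ "{1..2 * k - 1}" "\<lambda>i. \<bar>Cf i\<bar>"]
    by (force simp: sum_nonneg)+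
  have "nr (Apad i x) \<le> C * nr x" if "i \<in> {1..2 * k}" for i x
  proof (cases "i = 2 * k")
    case False
    then have "i \<in> {1..2 * k - 1}"
      using that by auto
    then show ?thesis
      using Cf[of i x] C(2)[of i] False by (simp add: Apad_def) (meson mult_right_mono nr_nonneg order_trans)
  next
    case True
    have "1 * nr x \<le> C * nr x"
      using C(1) by (intro mult_right_mono) auto
    then show ?thesis
      using True by (simp add: Apad_def)
  qed
  then show ?thesis
    using C(1) by blast
qed

lemma cesaro_eq: "cesaro sm U k \<alpha> A N x =
    sm (1 / of_nat N ^ k) (\<Sum>n\<in>PiE {1..k} (\<lambda>_. {..<N}). alt (2 * k) (\<lambda>i. U ^^ n (\<alpha> i)) Apad x)"
  unfolding cesaro_def Apad_def word_eq_alt[OF k] ..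

definition trunc_cesaro :: "(nat \<Rightarrow> complex set) \<Rightarrow> nat \<Rightarrow> 'a \<Rightarrow> 'a" where
  "trunc_cesaro Qs N x = sm (1 / of_nat N ^ k)
     (\<Sum>n\<in>PiE {1..k} (\<lambda>_. {..<N}). alt (2 * k) (\<lambda>i v. (U ^^ n (\<alpha> i)) (proj_sum (Qs i) v)) Apad x)"

primrec partial_words :: "'a \<Rightarrow> nat \<Rightarrow> 'a set" where
  "partial_words x 0 = {x}"
| "partial_words x (Suc j) = {(U ^^ n) w | n w. w \<in> (\<Union>i\<in>{1..2 * k}. Apad i ` partial_words x j)}"

definition projected_vectors :: "'a \<Rightarrow> 'a set" where
  "projected_vectors x = (\<Union>j<2 * k. \<Union>i\<in>{1..2 * k}. Apad i ` partial_words x j)"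

lemma precompact_Apad_image:
  assumes "precompact S" and "i \<in> {1..2 * k}"
  shows "precompact (Apad i ` S)"
proof -
  obtain C where "C \<ge> 1" and C: "\<And>x. nr (Apad i x) \<le> C * nr x"
    using Apad_bound assms(2) by blast
  show ?thesis
  proof (rule precompact_image[OF assms(1), of _ C])
    show "nr (Apad i x - Apad i y) \<le> C * nr (x - y)" for x y
      using C[of "x - y"] by (simp add: linear_diff[OF lin_Apad[OF assms(2)]])
  qed (use \<open>C \<ge> 1\<close> in simp)
qed

lemma precompact_partial_words: "precompact (partial_words x j)"
proof (induction j)
  case (Suc j)
  have "precompact (\<Union>i\<in>{1..2 * k}. Apad i ` partial_words x j)"
    by (intro precompact_UN precompact_Apad_image Suc) auto
  from precompact_orbits[OF this] show ?case
    by simp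
qed (simp add: precompact_singleton)

lemma precompact_projected_vectors: "precompact (projected_vectors x)"
  unfolding projected_vectors_def
  by (intro precompact_UN precompact_Apad_image precompact_partial_words) auto

lemma nr_alt_minus_trunc_le:
  assumes C: "C \<ge> 1" "\<And>i x. i \<in> {1..2 * k} \<Longrightarrow> nr (Apad i x) \<le> C * nr x"
    and Qs: "\<And>i. i \<in> {1..2 * k} \<Longrightarrow> finite (Qs i)"
    and err: "\<And>i w. i \<in> {1..2 * k} \<Longrightarrow> w \<in> projected_vectors x \<Longrightarrow> nr (w - proj_sum (Qs i) w) \<le> \<epsilon>"
  shows "nr (alt (2 * k) (\<lambda>i. U ^^ n (\<alpha> i)) Apad x
      - alt (2 * k) (\<lambda>i v. (U ^^ n (\<alpha> i)) (proj_sum (Qs i) v)) Apad x) \<le> real (2 * k) * C ^ (2 * k) * \<epsilon>"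
proof (rule alt_perturb_bound[where K = "partial_words x"])
  fix i assume i: "i \<in> {1..2 * k}"
  show "lin (Apad i) \<and> lin (\<lambda>v. (U ^^ n (\<alpha> i)) (proj_sum (Qs i) v))"
    using lin_Apad[OF i] Vector_Spaces.linear_compose[OF lin_proj_sum lin_U_power]
    by (simp add: comp_def)
  show "nr ((U ^^ n (\<alpha> i)) (proj_sum (Qs i) v)) \<le> nr v" for v
    using nr_proj_sum_le[OF Qs[OF i]] by simp
  show "nr (Apad i v) \<le> C * nr v" for v
    by (rule C(2)[OF i])
  show "(U ^^ n (\<alpha> i)) (Apad i v) \<in> partial_words x (Suc j)" if "v \<in> partial_words x j" for j v
  proof -
    have "Apad i v \<in> (\<Union>i\<in>{1..2 * k}. Apad i ` partial_words x j)"
      using that i by blast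
    then show ?thesis
      by auto
  qed
  show "nr ((U ^^ n (\<alpha> i)) (Apad i v) - (U ^^ n (\<alpha> i)) (proj_sum (Qs i) (Apad i v))) \<le> \<epsilon>"
    if "j < 2 * k" "v \<in> partial_words x j" for j v
  proof -
    have "Apad i v \<in> projected_vectors x"
      unfolding projected_vectors_def using that i by blast
    then show ?thesis
      using err[OF i] by (simp add: linear_diff[OF lin_U_power, symmetric])
  qed
qed (use C in auto)

lemma nr_cesaro_minus_trunc_le:
  assumes C: "C \<ge> 1" "\<And>i x. i \<in> {1..2 * k} \<Longrightarrow> nr (Apad i x) \<le> C * nr x"
    and Qs: "\<And>i. i \<in> {1..2 * k} \<Longrightarrow> finite (Qs i)"
    and err: "\<And>i w. i \<in> {1..2 * k} \<Longrightarrow> w \<in> projected_vectors x \<Longrightarrow> nr (w - proj_sum (Qs i) w) \<le> \<epsilon>"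
  shows "nr (cesaro sm U k \<alpha> A N x - trunc_cesaro Qs N x) \<le> real (2 * k) * C ^ (2 * k) * \<epsilon>"
proof -
  have one: "1 \<in> {1..2 * k}"
    using k by simp
  have "Apad 1 x \<in> projected_vectors x"
    unfolding projected_vectors_def by (intro UN_I[of 0] UN_I[of 1]) (use k in auto)
  then have "nr (Apad 1 x - proj_sum (Qs 1) (Apad 1 x)) \<le> \<epsilon>"
    by (rule err[OF one])
  then have "\<epsilon> \<ge> 0"
    by (meson nr_nonneg order_trans)
  have "cesaro sm U k \<alpha> A N x - trunc_cesaro Qs N x = sm (1 / of_nat (card (PiE {1..k} (\<lambda>_. {..<N}))))
      (\<Sum>n\<in>PiE {1..k} (\<lambda>_. {..<N}). alt (2 * k) (\<lambda>i. U ^^ n (\<alpha> i)) Apad x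
        - alt (2 * k) (\<lambda>i v. (U ^^ n (\<alpha> i)) (proj_sum (Qs i) v)) Apad x)"
    by (simp add: cesaro_eq trunc_cesaro_def card_PiE scale_right_diff_distrib sum_subtractf)
  also have "nr \<dots> \<le> real (2 * k) * C ^ (2 * k) * \<epsilon>"
    using C(1) \<open>\<epsilon> \<ge> 0\<close> by (intro nr_average_le[OF nr_alt_minus_trunc_le[OF C Qs err]] mult_nonneg_nonneg) auto
  finally show ?thesis .
qed

lemma alt_U_power_proj_sum:
  assumes "\<And>i. i \<in> {1..2 * k} \<Longrightarrow> finite (Qs i)"
  shows "alt (2 * k) (\<lambda>i v. (U ^^ e i) (proj_sum (Qs i) v)) Apad x
    = (\<Sum>c\<in>PiE {1..2 * k} Qs. sm (\<Prod>i\<in>{1..2 * k}. c i ^ e i) (alt (2 * k) (\<lambda>i. E (c i)) Apad x))"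
proof -
  have "alt (2 * k) (\<lambda>i v. (U ^^ e i) (proj_sum (Qs i) v)) Apad x
      = alt (2 * k) (\<lambda>i v. \<Sum>z\<in>Qs i. sm (z ^ e i) (E z v)) Apad x"
    by (simp add: U_power_proj_sum)
  also have "\<dots> = (\<Sum>c\<in>PiE {1..2 * k} Qs. alt (2 * k) (\<lambda>i v. sm (c i ^ e i) (E (c i) v)) Apad x)"
    by (rule alt_sum_expand) (simp_all add: lin_Apad linear_compose_scale_right lin_Eproj)
  also have "\<dots> = (\<Sum>c\<in>PiE {1..2 * k} Qs. sm (\<Prod>i\<in>{1..2 * k}. c i ^ e i) (alt (2 * k) (\<lambda>i. E (c i)) Apad x))"
    by (intro sum.cong refl alt_scale) (simp add: lin_Apad lin_Eproj)
  finally show ?thesis .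
qed

lemma trunc_cesaro_expand:
  assumes "\<And>i. i \<in> {1..2 * k} \<Longrightarrow> finite (Qs i)"
  shows "trunc_cesaro Qs N x = (\<Sum>c\<in>PiE {1..2 * k} Qs.
    sm ((1 / of_nat N ^ k) * (\<Sum>n\<in>PiE {1..k} (\<lambda>_. {..<N}). \<Prod>i\<in>{1..2 * k}. c i ^ n (\<alpha> i)))
      (alt (2 * k) (\<lambda>i. E (c i)) Apad x))"
proof -
  have "trunc_cesaro Qs N x = sm (1 / of_nat N ^ k) (\<Sum>n\<in>PiE {1..k} (\<lambda>_. {..<N}). \<Sum>c\<in>PiE {1..2 * k} Qs.
      sm (\<Prod>i\<in>{1..2 * k}. c i ^ n (\<alpha> i)) (alt (2 * k) (\<lambda>i. E (c i)) Apad x))"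
    unfolding trunc_cesaro_def by (simp only: alt_U_power_proj_sum[OF assms])
  also have "\<dots> = sm (1 / of_nat N ^ k) (\<Sum>c\<in>PiE {1..2 * k} Qs. \<Sum>n\<in>PiE {1..k} (\<lambda>_. {..<N}).
      sm (\<Prod>i\<in>{1..2 * k}. c i ^ n (\<alpha> i)) (alt (2 * k) (\<lambda>i. E (c i)) Apad x))"
    by (subst sum.swap) (rule refl)
  finally show ?thesis
    by (simp add: scale_sum_left[symmetric] scale_sum_right)
qed

lemma trunc_cesaro_limit:
  assumes "\<And>i. i \<in> {1..2 * k} \<Longrightarrow> finite (Qs i)" and "\<And>i. i \<in> {1..2 * k} \<Longrightarrow> Qs i \<subseteq> sigma_pp sm U"
  shows "hlim (\<lambda>N. trunc_cesaro Qs N x)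
    (\<Sum>c\<in>{c \<in> PiE {1..2 * k} Qs. paired k \<alpha> c}. alt (2 * k) (\<lambda>i. E (c i)) Apad x)"
proof -
  have "hlim (\<lambda>N. \<Sum>c\<in>PiE {1..2 * k} Qs.
      sm ((1 / of_nat N ^ k) * (\<Sum>n\<in>PiE {1..k} (\<lambda>_. {..<N}). \<Prod>i\<in>{1..2 * k}. c i ^ n (\<alpha> i)))
        (alt (2 * k) (\<lambda>i. E (c i)) Apad x))
      (\<Sum>c\<in>PiE {1..2 * k} Qs. sm (if paired k \<alpha> c then 1 else 0) (alt (2 * k) (\<lambda>i. E (c i)) Apad x))"
  proof (intro hlim_sum hlim_scale_left cesaro_pairs_tendsto[OF pp])
    fix c i assume "c \<in> PiE {1..2 * k} Qs" "i \<in> {1..2 * k}"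
    then have "c i \<in> sigma_pp sm U"
      using assms(2) PiE_mem by blast
    then show "cmod (c i) \<le> 1"
      using sigma_pp_unit by simp
  qed
  then have "hlim (\<lambda>N. trunc_cesaro Qs N x)
      (\<Sum>c\<in>PiE {1..2 * k} Qs. sm (if paired k \<alpha> c then 1 else 0) (alt (2 * k) (\<lambda>i. E (c i)) Apad x))"
    by (simp only: trunc_cesaro_expand[OF assms(1)])
  moreover have "finite (PiE {1..2 * k} Qs)"
    by (rule finite_PiE) (simp_all add: assms(1))
  then have "(\<Sum>c\<in>PiE {1..2 * k} Qs. sm (if paired k \<alpha> c then 1 else 0) (alt (2 * k) (\<lambda>i. E (c i)) Apad x))
      = (\<Sum>c\<in>{c \<in> PiE {1..2 * k} Qs. paired k \<alpha> c}. alt (2 * k) (\<lambda>i. E (c i)) Apad x)"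
    by (simp add: sum.inter_filter if_distrib[of "\<lambda>a. sm a _"] cong: if_cong)
  ultimately show ?thesis
    by simp
qed

text \<open>The eigenvalues \<open>R\<close> without inverse in the point spectrum are needed to make the
  truncation error small, but no paired choice can use them.\<close>

definition choice_sets :: "complex set \<Rightarrow> complex set \<Rightarrow> nat \<Rightarrow> complex set" where
  "choice_sets F R i = (if is_first k \<alpha> i then F \<union> R else cnj ` F \<union> R)"

lemma paired_choice_first:
  assumes F: "F \<subseteq> sigma_pp_a sm U" and R: "R \<subseteq> sigma_pp sm U" "R \<inter> sigma_pp_a sm U = {}"
    and c: "c \<in> PiE {1..2 * k} (choice_sets F R)" "paired k \<alpha> c" and l: "l \<in> {1..k}"
  shows "c (first_pos k \<alpha> l) \<in> F"
proof -
  have "c (first_pos k \<alpha> l) \<in> choice_sets F R (first_pos k \<alpha> l)"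
    and "c (second_pos k \<alpha> l) \<in> choice_sets F R (second_pos k \<alpha> l)"
    using PiE_mem[OF c(1)] first_pos_mem[OF pp l] second_pos_mem[OF pp l] by blast+
  then have first: "c (first_pos k \<alpha> l) \<in> F \<union> R" and second: "c (second_pos k \<alpha> l) \<in> cnj ` F \<union> R"
    using is_first_first_pos[OF pp l] not_is_first_second_pos[OF pp l] by (simp_all add: choice_sets_def)
  have "cnj ` F \<subseteq> sigma_pp sm U"
    using F sigma_pp_a_cnj unfolding sigma_pp_a_def by blast
  then have "c (second_pos k \<alpha> l) \<in> sigma_pp sm U"
    using second R(1) by blast
  moreover have "c (first_pos k \<alpha> l) * c (second_pos k \<alpha> l) = 1"
    using c(2) l unfolding paired_def by blast
  ultimately have "c (first_pos k \<alpha> l) \<notin> R"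
    using R unfolding sigma_pp_a_def by blast
  then show ?thesis
    using first by blast
qed

lemma paired_choice_eq_zsharp:
  assumes F: "F \<subseteq> sigma_pp_a sm U" and R: "R \<subseteq> sigma_pp sm U" "R \<inter> sigma_pp_a sm U = {}"
    and c: "c \<in> PiE {1..2 * k} (choice_sets F R)" "paired k \<alpha> c"
  shows "c = restrict (zsharp k \<alpha> (restrict (\<lambda>l. c (first_pos k \<alpha> l)) {1..k})) {1..2 * k}"
proof
  fix i
  show "c i = restrict (zsharp k \<alpha> (restrict (\<lambda>l. c (first_pos k \<alpha> l)) {1..k})) {1..2 * k} i"
  proof (cases "i \<in> {1..2 * k}")
    case True
    have "zsharp k \<alpha> (restrict (\<lambda>l. c (first_pos k \<alpha> l)) {1..k}) i = zsharp k \<alpha> (\<lambda>l. c (first_pos k \<alpha> l)) i"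
      using pair_partition_range[OF pp True] by (simp add: zsharp_is_first)
    moreover have "cmod (c (first_pos k \<alpha> l)) = 1" if "l \<in> {1..k}" for l
      using paired_choice_first[OF F R c that] F sigma_pp_a_unit by blast
    ultimately show ?thesis
      using paired_imp_zsharp[OF pp c(2) _ True] True by simp
  qed (use c(1) in auto)
qed

lemma zsharp_paired_choice:
  assumes F: "F \<subseteq> sigma_pp_a sm U" and z: "z \<in> PiE {1..k} (\<lambda>_. F)"
  shows "restrict (zsharp k \<alpha> z) {1..2 * k} \<in> PiE {1..2 * k} (choice_sets F R)"
    and "paired k \<alpha> (restrict (zsharp k \<alpha> z) {1..2 * k})"
proof -
  have "zsharp k \<alpha> z i \<in> choice_sets F R i" if "i \<in> {1..2 * k}" for i
    using z pair_partition_range[OF pp that] by (auto simp: zsharp_is_first choice_sets_def)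
  then show "restrict (zsharp k \<alpha> z) {1..2 * k} \<in> PiE {1..2 * k} (choice_sets F R)"
    by simp
  have "cmod (z l) = 1" if "l \<in> {1..k}" for l
    using z that F sigma_pp_a_unit PiE_mem by blast
  then have "paired k \<alpha> (zsharp k \<alpha> z)"
    by (rule paired_zsharp[OF pp])
  then show "paired k \<alpha> (restrict (zsharp k \<alpha> z) {1..2 * k})"
    using first_pos_mem[OF pp] second_pos_mem[OF pp] by (simp add: paired_def)
qed

lemma paired_choices_eq:
  assumes F: "F \<subseteq> sigma_pp_a sm U" and R: "R \<subseteq> sigma_pp sm U" "R \<inter> sigma_pp_a sm U = {}"
  shows "{c \<in> PiE {1..2 * k} (choice_sets F R). paired k \<alpha> c}
    = (\<lambda>z. restrict (zsharp k \<alpha> z) {1..2 * k}) ` PiE {1..k} (\<lambda>_. F)"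
proof
  show "{c \<in> PiE {1..2 * k} (choice_sets F R). paired k \<alpha> c}
      \<subseteq> (\<lambda>z. restrict (zsharp k \<alpha> z) {1..2 * k}) ` PiE {1..k} (\<lambda>_. F)"
  proof
    fix c assume "c \<in> {c \<in> PiE {1..2 * k} (choice_sets F R). paired k \<alpha> c}"
    then have c: "c \<in> PiE {1..2 * k} (choice_sets F R)" "paired k \<alpha> c"
      by auto
    have "restrict (\<lambda>l. c (first_pos k \<alpha> l)) {1..k} \<in> PiE {1..k} (\<lambda>_. F)"
      using paired_choice_first[OF F R c] by simp
    then show "c \<in> (\<lambda>z. restrict (zsharp k \<alpha> z) {1..2 * k}) ` PiE {1..k} (\<lambda>_. F)"
      using paired_choice_eq_zsharp[OF F R c] by blast
  qed
  show "(\<lambda>z. restrict (zsharp k \<alpha> z) {1..2 * k}) ` PiE {1..k} (\<lambda>_. F)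
      \<subseteq> {c \<in> PiE {1..2 * k} (choice_sets F R). paired k \<alpha> c}"
    using zsharp_paired_choice[OF F] by blast
qed

lemma paired_sum_eq_S_partial:
  assumes F: "F \<subseteq> sigma_pp_a sm U" and R: "R \<subseteq> sigma_pp sm U" "R \<inter> sigma_pp_a sm U = {}"
  shows "(\<Sum>c\<in>{c \<in> PiE {1..2 * k} (choice_sets F R). paired k \<alpha> c}. alt (2 * k) (\<lambda>i. E (c i)) Apad x)
    = S_partial sm ip U k \<alpha> A F x"
proof -
  have "inj_on (\<lambda>z. restrict (zsharp k \<alpha> z) {1..2 * k}) (PiE {1..k} (\<lambda>_. F))"
  proof (rule inj_onI)
    fix z z' assume z: "z \<in> PiE {1..k} (\<lambda>_. F)" "z' \<in> PiE {1..k} (\<lambda>_. F)"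
      and eq: "restrict (zsharp k \<alpha> z) {1..2 * k} = restrict (zsharp k \<alpha> z') {1..2 * k}"
    show "z = z'"
    proof (rule PiE_ext[OF z])
      fix l assume l: "l \<in> {1..k}"
      then show "z l = z' l"
        using fun_cong[OF eq, of "first_pos k \<alpha> l"] first_pos_mem[OF pp l] zsharp_first_pos[OF pp l]
        by simp
    qed
  qed
  moreover have "alt (2 * k) (\<lambda>i. E (restrict (zsharp k \<alpha> z) {1..2 * k} i)) Apad x
      = word k (\<lambda>i. E (zsharp k \<alpha> z i)) A x" for z
    unfolding Apad_def word_eq_alt[OF k] by (rule arg_cong[where f = "\<lambda>f. f x"], rule alt_cong) auto
  ultimately show ?thesis
    unfolding paired_choices_eq[OF F R] S_partial_def by (simp add: sum.reindex)
qed

lemma choice_sets_supset: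
  assumes "Q0 \<inter> sigma_pp_a sm U \<subseteq> F" and "cnj ` (Q0 \<inter> sigma_pp_a sm U) \<subseteq> F"
  shows "Q0 \<subseteq> choice_sets F (Q0 - sigma_pp_a sm U) i"
proof -
  have "z \<in> cnj ` F" if "z \<in> Q0 \<inter> sigma_pp_a sm U" for z
    using that assms(2) image_eqI[of z cnj "cnj z"] by auto
  then show ?thesis
    using assms(1) by (auto simp: choice_sets_def)
qed

lemma trunc_cesaro_choice_limit:
  assumes F: "finite F" "F \<subseteq> sigma_pp_a sm U" and R: "finite R" "R \<subseteq> sigma_pp sm U" "R \<inter> sigma_pp_a sm U = {}"
  shows "hlim (\<lambda>N. trunc_cesaro (choice_sets F R) N x) (S_partial sm ip U k \<alpha> A F x)"
proof -
  have "F \<union> cnj ` F \<subseteq> sigma_pp sm U"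
    using F(2) sigma_pp_a_cnj unfolding sigma_pp_a_def by blast
  then have "choice_sets F R i \<subseteq> sigma_pp sm U" for i
    using R(2) by (auto simp: choice_sets_def)
  moreover have "finite (choice_sets F R i)" for i
    using F(1) R(1) by (simp add: choice_sets_def)
  ultimately show ?thesis
    using trunc_cesaro_limit[of "choice_sets F R" x] paired_sum_eq_S_partial[OF F(2) R(2,3)] by simp
qed

lemma cesaro_approx_trunc:
  assumes "\<eta> > 0"
  shows "\<exists>R F0. finite R \<and> R \<subseteq> sigma_pp sm U \<and> R \<inter> sigma_pp_a sm U = {} \<and>
    finite F0 \<and> F0 \<subseteq> sigma_pp_a sm U \<and>
    (\<forall>F N. finite F \<longrightarrow> F0 \<subseteq> F \<longrightarrow> F \<subseteq> sigma_pp_a sm U \<longrightarrow>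
      nr (cesaro sm U k \<alpha> A N x - trunc_cesaro (choice_sets F R) N x) \<le> \<eta>)"
proof -
  obtain C where C: "C \<ge> 1" "\<And>i x. i \<in> {1..2 * k} \<Longrightarrow> nr (Apad i x) \<le> C * nr x"
    using Apad_bound by blast
  define \<epsilon> where "\<epsilon> = \<eta> / (real (2 * k) * C ^ (2 * k))"
  have pos: "real (2 * k) * C ^ (2 * k) > 0"
    using C k by simp
  have "\<epsilon> > 0"
    unfolding \<epsilon>_def using assms pos by (rule divide_pos_pos)
  have cancel: "a * (b / a) = b" if "a > 0" for a b :: real
    using that by simp
  have \<epsilon>_eq: "real (2 * k) * C ^ (2 * k) * \<epsilon> = \<eta>"
    unfolding \<epsilon>_def by (rule cancel[OF pos])
  obtain Q0 where Q0: "finite Q0" "Q0 \<subseteq> sigma_pp sm U"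
    "\<forall>Q. finite Q \<longrightarrow> Q0 \<subseteq> Q \<longrightarrow> (\<forall>w\<in>projected_vectors x. nr (w - proj_sum Q w) < \<epsilon>)"
    using proj_sum_approx_uniform[OF precompact_projected_vectors[of x] \<open>\<epsilon> > 0\<close>] by (elim exE conjE)
  define R where "R = Q0 - sigma_pp_a sm U"
  define F0 where "F0 = (Q0 \<inter> sigma_pp_a sm U) \<union> cnj ` (Q0 \<inter> sigma_pp_a sm U)"
  have R: "finite R" "R \<subseteq> sigma_pp sm U" "R \<inter> sigma_pp_a sm U = {}"
    using Q0 by (auto simp: R_def)
  have F0: "finite F0" "F0 \<subseteq> sigma_pp_a sm U"
    using Q0(1) sigma_pp_a_cnj by (auto simp: F0_def)
  have main: "nr (cesaro sm U k \<alpha> A N x - trunc_cesaro (choice_sets F R) N x) \<le> \<eta>"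
    if F: "finite F" "F0 \<subseteq> F" for F N
  proof -
    have "Q0 \<subseteq> choice_sets F R i" for i
      unfolding R_def using F(2) by (intro choice_sets_supset) (auto simp: F0_def)
    moreover have "finite (choice_sets F R i)" for i
      using F(1) R(1) by (simp add: choice_sets_def)
    ultimately have "nr (cesaro sm U k \<alpha> A N x - trunc_cesaro (choice_sets F R) N x)
        \<le> real (2 * k) * C ^ (2 * k) * \<epsilon>"
      using Q0(3) by (intro nr_cesaro_minus_trunc_le[OF C]) (auto intro: less_imp_le)
    then show ?thesis
      using \<epsilon>_eq by simp
  qed
  show ?thesis
    using R F0 main by (intro exI[of _ R] exI[of _ F0]) auto
qed

lemma cesaro_convergent: "\<exists>L. hlim (\<lambda>N. cesaro sm U k \<alpha> A N x) L"
proof (rule hcauchy_imp_hlim, rule hcauchy_uniform_approx)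
  fix e :: real assume "e > 0"
  obtain R F0 where R: "finite R" "R \<subseteq> sigma_pp sm U" "R \<inter> sigma_pp_a sm U = {}"
    and F0: "finite F0" "F0 \<subseteq> sigma_pp_a sm U"
    and approx: "\<forall>F N. finite F \<longrightarrow> F0 \<subseteq> F \<longrightarrow> F \<subseteq> sigma_pp_a sm U \<longrightarrow>
      nr (cesaro sm U k \<alpha> A N x - trunc_cesaro (choice_sets F R) N x) \<le> e"
    using cesaro_approx_trunc[OF \<open>e > 0\<close>, of x] by (elim exE conjE)
  have "hcauchy (\<lambda>N. trunc_cesaro (choice_sets F0 R) N x)"
    by (rule hlim_imp_hcauchy[OF trunc_cesaro_choice_limit[OF F0 R]])
  moreover have "\<forall>N. nr (cesaro sm U k \<alpha> A N x - trunc_cesaro (choice_sets F0 R) N x) \<le> e"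
    using approx F0 by blast
  ultimately show "\<exists>Y. hcauchy Y \<and> (\<forall>N. nr (cesaro sm U k \<alpha> A N x - Y N) \<le> e)"
    by blast
qed

definition cesaro_limit :: "'a \<Rightarrow> 'a" where
  "cesaro_limit x = (SOME L. hlim (\<lambda>N. cesaro sm U k \<alpha> A N x) L)"

lemma hlim_cesaro_limit: "hlim (\<lambda>N. cesaro sm U k \<alpha> A N x) (cesaro_limit x)"
  unfolding cesaro_limit_def using cesaro_convergent by (rule someI_ex)

lemma S_partial_tendsto:
  "((\<lambda>F. nr (S_partial sm ip U k \<alpha> A F x - cesaro_limit x)) \<longlongrightarrow> 0) (finite_subsets_at_top (sigma_pp_a sm U))"
proof (rule tendstoI)
  fix e :: real assume "e > 0"
  then have "e / 2 > 0"
    by simp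
  obtain R F0 where R: "finite R" "R \<subseteq> sigma_pp sm U" "R \<inter> sigma_pp_a sm U = {}"
    and F0: "finite F0" "F0 \<subseteq> sigma_pp_a sm U"
    and approx: "\<forall>F N. finite F \<longrightarrow> F0 \<subseteq> F \<longrightarrow> F \<subseteq> sigma_pp_a sm U \<longrightarrow>
      nr (cesaro sm U k \<alpha> A N x - trunc_cesaro (choice_sets F R) N x) \<le> e / 2"
    using cesaro_approx_trunc[OF \<open>e / 2 > 0\<close>, of x] by (elim exE conjE)
  have bound: "nr (S_partial sm ip U k \<alpha> A F x - cesaro_limit x) \<le> e / 2"
    if F: "finite F" "F0 \<subseteq> F" "F \<subseteq> sigma_pp_a sm U" for F
  proof (rule hlim_dist_le[OF trunc_cesaro_choice_limit[OF F(1,3) R] hlim_cesaro_limit])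
    fix N
    have "nr (cesaro sm U k \<alpha> A N x - trunc_cesaro (choice_sets F R) N x) \<le> e / 2"
      using approx F by blast
    then show "nr (trunc_cesaro (choice_sets F R) N x - cesaro sm U k \<alpha> A N x) \<le> e / 2"
      by (simp add: nr_diff_commute)
  qed
  show "\<forall>\<^sub>F F in finite_subsets_at_top (sigma_pp_a sm U).
      dist (nr (S_partial sm ip U k \<alpha> A F x - cesaro_limit x)) 0 < e"
    unfolding eventually_finite_subsets_at_top
  proof (intro exI[of _ F0] conjI allI impI)
    fix F assume "finite F \<and> F0 \<subseteq> F \<and> F \<subseteq> sigma_pp_a sm U"
    then have "nr (S_partial sm ip U k \<alpha> A F x - cesaro_limit x) \<le> e / 2"
      using bound by blast
    then show "dist (nr (S_partial sm ip U k \<alpha> A F x - cesaro_limit x)) 0 < e"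
      using \<open>e > 0\<close> by (simp add: dist_real_def)
  qed (use F0 in auto)
qed

lemma S_partial_weak_tendsto:
  "((\<lambda>F. ip (S_partial sm ip U k \<alpha> A F x) y) \<longlongrightarrow> ip (cesaro_limit x) y)
    (finite_subsets_at_top (sigma_pp_a sm U))"
proof -
  have "((\<lambda>F. ip (S_partial sm ip U k \<alpha> A F x) y - ip (cesaro_limit x) y) \<longlongrightarrow> 0)
      (finite_subsets_at_top (sigma_pp_a sm U))"
  proof (rule Lim_null_comparison[OF always_eventually])
    have "cmod (ip (S_partial sm ip U k \<alpha> A F x) y - ip (cesaro_limit x) y)
        \<le> nr (S_partial sm ip U k \<alpha> A F x - cesaro_limit x) * nr y" for F
      using cauchy_schwarz[of "S_partial sm ip U k \<alpha> A F x - cesaro_limit x" y] by (simp add: ip_diff_left)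
    then show "\<forall>F. norm (ip (S_partial sm ip U k \<alpha> A F x) y - ip (cesaro_limit x) y)
        \<le> nr (S_partial sm ip U k \<alpha> A F x - cesaro_limit x) * nr y"
      by simp
    have "((\<lambda>F. nr (S_partial sm ip U k \<alpha> A F x - cesaro_limit x) * nr y) \<longlongrightarrow> 0 * nr y)
        (finite_subsets_at_top (sigma_pp_a sm U))"
      by (intro tendsto_mult S_partial_tendsto tendsto_const)
    then show "((\<lambda>F. nr (S_partial sm ip U k \<alpha> A F x - cesaro_limit x) * nr y) \<longlongrightarrow> 0)
        (finite_subsets_at_top (sigma_pp_a sm U))"
      by simp
  qed
  then show ?thesis
    by (rule LIM_zero_cancel)
qed

lemma S_op_eq_cesaro_limit: "S_op sm ip U k \<alpha> A = cesaro_limit"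
  unfolding S_op_def
proof (rule the_equality)
  fix S assume S: "\<forall>x y. ((\<lambda>F. ip (S_partial sm ip U k \<alpha> A F x) y) \<longlongrightarrow> ip (S x) y)
    (finite_subsets_at_top (sigma_pp_a sm U))"
  have "ip (S x - cesaro_limit x) y = 0" for x y
    using tendsto_unique[OF finite_subsets_at_top_neq_bot S[rule_format, of x y] S_partial_weak_tendsto]
    by (simp add: ip_diff_left)
  then show "S = cesaro_limit"
    using ip_eq_0_imp_eq_0 by (metis eq_iff_diff_eq_0 ext)
qed (use S_partial_weak_tendsto in blast)

end

theorem theorem3p1:
  fixes sm :: "complex \<Rightarrow> 'a::ab_group_add \<Rightarrow> 'a"
    and ip :: "'a \<Rightarrow> 'a \<Rightarrow> complex"
    and U :: "'a \<Rightarrow> 'a"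
    and k :: nat and \<alpha> :: "nat \<Rightarrow> nat" and A :: "nat \<Rightarrow> 'a \<Rightarrow> 'a"
  assumes "hilbert_space sm ip"
    and "unitary_op sm ip U"
    and "almost_periodic sm ip U"
    and "k \<ge> 1"
    and "pair_partition k \<alpha>"
    and "\<forall>i\<in>{1..2*k-1}. bounded_op sm ip (A i)"
  shows "\<forall>x. ((\<lambda>N. hnorm ip (cesaro sm U k \<alpha> A N x - S_op sm ip U k \<alpha> A x)) \<longlongrightarrow> 0) sequentially"
proof -
  interpret pair_cesaro sm ip U k \<alpha> A
    by unfold_locales (use assms in auto)
  show ?thesis
    using hlim_cesaro_limit unfolding S_op_eq_cesaro_limit hlim_def by blast
qed

end
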